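(* Let $P,p,\kappa\in\mathbb{C}\setminus\{0\}$, and let $(\ast)$ be the PDE of the context. (i) Suppose $B(x,y)=\sum_{k=0}^{\infty}x^kB_k(y)$ is a formal solution of $(\ast)$ with each $B_k(y)$ rational in $y$ and $B_0\not\equiv0$. Then $B_0(y)\equiv q$ for some constant $q\in\mathbb{C}\setminus\{0\}$, $$B_1(y)=c_2y^3+c_1y+\frac{8p^2(q^3-1)}{3\kappa^2P^2q\,y}$$ for some $c_1,c_2\in\mathbb{C}$, and for every $k\in\mathbb{N}$, $B_k$ is a Laurent polynomial of the form $B_k(y)=\sum_{m=0}^{2k}\beta_{k,2m-k}\,y^{2m-k}$, where the two top coefficients $c_{2k}:=\beta_{k,3k}$ and $c_{2k-1}:=\beta_{k,3k-2}$ are (free) complex constants, and for $0\le m\le 2k-2$ the coefficient $\beta_{k,2m-k}$ is a polynomial in $c_1,\dots,c_{2k-2}$ of the form $$\beta_{k,2m-k}=\sum_{\substack{n_1,\dots,n_{2k-2}\ge0\\ \sum_j j n_j\le m}}\mathfrak b_{k;n_1,\dots,n_{2k-2}}(\kappa^2,P,p,q)\prod_{j=1}^{2k-2}c_j^{n_j},$$ with coefficients $\mathfrak b$ rational functions of $\kappa^2,P,p,q$. In particular, for $k\ge2$, $\beta_{k,-k}$ does not depend on the $c_j$ and $\beta_{k,2-k}$ is an affine function of $c_1$ alone. (ii) Conversely, for every $q\in\mathbb{C}\setminus\{0\}$ and every sequence $(c_n)_{n\in\mathbb{N}}\subset\mathbb{C}$ there exists a formal solution $\sum_{k\ge0}x^kB_k(y)$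 of $(\ast)$ with $B_0\equiv q$ and coefficients $B_k$ rational in $y,P,p^2,\kappa^2$ of the form described in (i), and it is unique under the normalization that, for each $k\in\mathbb{N}$, the coefficients of $y^{3k}$ and $y^{3k-2}$ in $B_k$ equal $c_{2k}$ and $c_{2k-1}$, respectively.
   Context: Fix $P,p,\kappa\in\mathbb{C}\setminus\{0\}$. Let $D$ be the first-order differential operator in two variables $x,y$: $$D=\Big(\frac{y}{2}+\frac{iP}{x}\Big(-\frac12+\frac{\kappa^2(y^2-x^2)}{4(4xy+\kappa^2(y-x)^2)}\Big)\Big)\frac{\partial}{\partial y}+\Big(\frac{x}{2}+\frac{iP}{y}\Big(\frac12+\frac{\kappa^2(y^2-x^2)}{4(4xy+\kappa^2(y-x)^2)}\Big)\Big)\frac{\partial}{\partial x},$$ and let $(\ast)$ denote the PDE $$D^2\ln A=-\frac{4p^2}{3xy\,(4xy+\kappa^2(y-x)^2)}\Big(A-\frac{1}{A^2}\Big)$$ for an unknown $A=A(x,y)$. A series $\sum_k x^kB_k(y)$ with coefficients rational in $y$ is called a formal solution if, after substitution into $(\ast)$ (with $D^2\ln A=(A\,D^2A-(DA)^2)/A^2$, denominators cleared) and expansion in powers of $x$, all coefficients vanish identically. *)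

theory Defs
  imports Complex_Main "HOL-Computational_Algebra.Computational_Algebra"
begin

text \<open>Rational functions of y are embedded into the field of formal Laurent series
  in y (expansion at y = 0); this embedding is injective and commutes with d/dy.\<close>

type_synonym ratY = "complex fls"
type_synonym ser = "complex fls fls"

definition rational_y :: "ratY \<Rightarrow> bool" where
  "rational_y f \<longleftrightarrow> (\<exists>a b :: complex poly. b \<noteq> 0 \<and>
      fps_to_fls (fps_of_poly b) * f = fps_to_fls (fps_of_poly a))"

definition series :: "(nat \<Rightarrow> ratY) \<Rightarrow> ser" where
  "series B = fps_to_fls (Abs_fps B)"

definition Dy :: "ser \<Rightarrow> ser" where
  "Dy F = Abs_fls (\<lambda>n. fls_deriv (fls_nth F n))"

definition Dx :: "ser \<Rightarrow> ser" where
  "Dx F = fls_deriv F"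

definition Xv :: ser where "Xv = fls_X"
definition Yv :: ser where "Yv = fls_const fls_X"
definition cst :: "complex \<Rightarrow> ser" where "cst c = fls_const (fls_const c)"

definition Qf :: "complex \<Rightarrow> ser" where
  "Qf \<kappa> = 4 * Xv * Yv + cst (\<kappa>^2) * (Yv - Xv)^2"

definition Rf :: "complex \<Rightarrow> ser" where
  "Rf \<kappa> = cst (\<kappa>^2) * (Yv^2 - Xv^2) / (4 * Qf \<kappa>)"

definition opD :: "complex \<Rightarrow> complex \<Rightarrow> ser \<Rightarrow> ser" where
  "opD P \<kappa> F =
     (Yv / 2 + cst (\<i> * P) / Xv * (- 1/2 + Rf \<kappa>)) * Dy F
   + (Xv / 2 + cst (\<i> * P) / Yv * (1/2 + Rf \<kappa>)) * Dx F"

text \<open>The PDE (*): D^2 ln A = (A D^2 A - (D A)^2)/A^2 = -4p^2/(3xy Q) (A - 1/A^2).\<close>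
definition pde :: "complex \<Rightarrow> complex \<Rightarrow> complex \<Rightarrow> ser \<Rightarrow> bool" where
  "pde P p \<kappa> A \<longleftrightarrow>
     (A * opD P \<kappa> (opD P \<kappa> A) - (opD P \<kappa> A)^2) / A^2
       = - cst (4 * p^2) / (3 * Xv * Yv * Qf \<kappa>) * (A - 1 / A^2)"

definition formal_solution :: "complex \<Rightarrow> complex \<Rightarrow> complex \<Rightarrow> (nat \<Rightarrow> ratY) \<Rightarrow> bool" where
  "formal_solution P p \<kappa> B \<longleftrightarrow> (\<forall>k. rational_y (B k)) \<and> pde P p \<kappa> (series B)"

type_synonym poly4 = "complex poly poly poly poly"

definition eval4 :: "poly4 \<Rightarrow> complex \<times> complex \<times> complex \<times> complex \<Rightarrow> complex" where
  "eval4 N w = (case w of (a, b, c, d) \<Rightarrow>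
      poly (poly (poly (poly N [:[:[:d:]:]:]) [:[:c:]:]) [:b:]) a)"

definition cB :: "(nat \<Rightarrow> ratY) \<Rightarrow> nat \<Rightarrow> complex" where
  "cB B j = (if even j then fls_nth (B (j div 2)) (int (3 * (j div 2)))
             else fls_nth (B ((j + 1) div 2)) (int (3 * ((j + 1) div 2)) - 2))"

definition expset :: "nat \<Rightarrow> nat \<Rightarrow> (nat \<Rightarrow> nat) set" where
  "expset k m = {n. (\<forall>j. n j \<noteq> 0 \<longrightarrow> 1 \<le> j \<and> j \<le> 2 * k - 2) \<and>
                    (\<Sum>j = 1..2 * k - 2. j * n j) \<le> m}"

definition coeff_form ::
  "(nat \<Rightarrow> nat \<Rightarrow> (nat \<Rightarrow> nat) \<Rightarrow> poly4) \<Rightarrow> (nat \<Rightarrow> nat \<Rightarrow> (nat \<Rightarrow> nat) \<Rightarrow> poly4)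
   \<Rightarrow> complex \<times> complex \<times> complex \<times> complex \<Rightarrow> (nat \<Rightarrow> ratY) \<Rightarrow> bool" where
  "coeff_form N D w B \<longleftrightarrow>
     (\<forall>k \<ge> 1.
        (\<forall>j. fls_nth (B k) j \<noteq> 0 \<longrightarrow> (\<exists>m \<le> 2 * k. j = int (2 * m) - int k)) \<and>
        (\<forall>m \<le> 2 * k - 2. \<forall>n \<in> expset k m. eval4 (D k m n) w \<noteq> 0) \<and>
        (\<forall>m \<le> 2 * k - 2. fls_nth (B k) (int (2 * m) - int k) =
            (\<Sum>n \<in> expset k m. eval4 (N k m n) w / eval4 (D k m n) w *
                               (\<Prod>j = 1..2 * k - 2. cB B j ^ n j))))"

end

(*
  Clearing denominators turns the PDE into a polynomial equation Epoly A = 0.  If A = q + O(x)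
  and H = O(x^k), the coefficient of x^(k+1) in Epoly (A + H) - Epoly A depends only on the
  coefficient h of x^k in H, through a diagonal operator multiplying the coefficient of y^s by a
  nonzero multiple of (3k - s - 2)(3k - s).  Hence B_k is determined by B_0, ..., B_(k-1),
  except for its coefficients of y^(3k) and y^(3k-2), which are free.  All monomials x^a y^b
  that occur satisfy -a <= b <= 3a with a + b even; this shows that the equations never
  constrain the free coefficients and that B_k is a Laurent polynomial in y^(-k), ..., y^(3k).
  Tracking, for each coefficient, its weight as a polynomial in the free constants gives the
  stated form.  Finally, the x-order-1 part of the equation is an ODE for B_0 whose only
  nonzero solutions are constants.
*)
theory Submission
  imports Defs
begin

unbundle fps_syntax

lemma fls_times_nth_bounds:
  fixes f g :: "'a::comm_ring_1 fls"
  assumes f: "\<And>i. i < m \<Longrightarrow> f $$ i = 0" and g: "\<And>i. i < m' \<Longrightarrow> g $$ i = 0"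
  shows "(f * g) $$ n = (\<Sum>i=m..n-m'. f $$ i * g $$ (n - i))"
proof (cases "f = 0 \<or> g = 0")
  case True thus ?thesis by auto
next
  case False
  hence "m \<le> fls_subdegree f" "m' \<le> fls_subdegree g"
    using f g nth_fls_subdegree_nonzero by (metis not_le)+
  hence "{fls_subdegree f..n - fls_subdegree g} \<subseteq> {m..n - m'}" by auto
  moreover have "f $$ i * g $$ (n - i) = 0"
    if "i \<in> {m..n - m'} - {fls_subdegree f..n - fls_subdegree g}" for i
    using that by auto
  ultimately have "(\<Sum>i=fls_subdegree f..n - fls_subdegree g. f $$ i * g $$ (n - i))
      = (\<Sum>i=m..n-m'. f $$ i * g $$ (n - i))"
    by (intro sum.mono_neutral_left) auto
  thus ?thesis by (simp add: fls_times_nth(2))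
qed

lemma fls_times_nth_nonzeroE:
  fixes f g :: "'a::comm_ring_1 fls"
  assumes "(f * g) $$ n \<noteq> 0"
  obtains i where "f $$ i * g $$ (n - i) \<noteq> 0"
  using assms by (metis (no_types, lifting) fls_times_nth(2) sum.neutral)

lemma fls_X_times_nth: "(fls_X * (f :: 'a::comm_ring_1 fls)) $$ n = f $$ (n - 1)"
  by (simp add: fls_X_times_conv_shift(1))

lemma Dy_nth [simp]: "Dy F $$ n = fls_deriv (F $$ n)"
proof -
  obtain N where "\<forall>n<N. F $$ n = 0" by (rule fls_nth_vanishes_belowE)
  thus ?thesis unfolding Dy_def by (intro nth_Abs_fls_lower_bound[of N]) auto
qed

lemma Dy_add [simp]: "Dy (F + G) = Dy F + Dy G"
  by (rule fls_eqI) simp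

lemma Dy_const [simp]: "Dy (fls_const f) = fls_const (fls_deriv f)"
  by (rule fls_eqI) simp

lemma Dy_mult: "Dy (F * G) = F * Dy G + Dy F * G"
proof (rule fls_eqI)
  fix n
  define m where "m = fls_subdegree F"
  define m' where "m' = fls_subdegree G"
  have F0: "\<And>i. i < m \<Longrightarrow> F $$ i = 0" and G0: "\<And>i. i < m' \<Longrightarrow> G $$ i = 0"
   and DF0: "\<And>i. i < m \<Longrightarrow> Dy F $$ i = 0" and DG0: "\<And>i. i < m' \<Longrightarrow> Dy G $$ i = 0"
    by (auto simp: m_def m'_def)
  have "Dy (F * G) $$ n = fls_deriv (\<Sum>i=m..n-m'. F $$ i * G $$ (n - i))"
    by (simp add: fls_times_nth_bounds[OF F0 G0])
  also have "\<dots> = (\<Sum>i=m..n-m'. F $$ i * fls_deriv (G $$ (n - i)) + fls_deriv (F $$ i) * G $$ (n - i))"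
    by (simp add: fls_deriv_sum)
  also have "\<dots> = (F * Dy G + Dy F * G) $$ n"
    by (simp add: fls_times_nth_bounds[OF F0 DG0] fls_times_nth_bounds[OF DF0 G0] sum.distrib)
  finally show "Dy (F * G) $$ n = (F * Dy G + Dy F * G) $$ n" .
qed

lemma Dx_nth: "Dx F $$ n = of_int (n + 1) * F $$ (n + 1)"
  by (simp add: Dx_def)

definition coeff_xy :: "ser \<Rightarrow> int \<Rightarrow> int \<Rightarrow> complex" where
  "coeff_xy F a b = F $$ a $$ b"

lemma cst_mult: "cst (a * b) = cst a * cst b"
  by (simp add: cst_def)
lemma cst_diff: "cst (a - b) = cst a - cst b"
  by (simp add: cst_def fls_minus_const)
lemma cst_power: "cst (a ^ n) = cst a ^ n"
  by (simp add: cst_def fls_const_power)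
lemma cst_numeral [simp]: "cst (numeral n) = numeral n"
  by (simp add: cst_def)
lemma cst_one [simp]: "cst 1 = 1"
  by (simp add: cst_def)
lemma cst_zero [simp]: "cst 0 = 0"
  by (simp add: cst_def)

lemma coeff_xy_add [simp]: "coeff_xy (F + G) a b = coeff_xy F a b + coeff_xy G a b"
  by (simp add: coeff_xy_def)
lemma coeff_xy_diff [simp]: "coeff_xy (F - G) a b = coeff_xy F a b - coeff_xy G a b"
  by (simp add: coeff_xy_def)
lemma coeff_xy_cst_mult [simp]: "coeff_xy (cst c * F) a b = c * coeff_xy F a b"
  by (simp add: coeff_xy_def cst_def)
lemma coeff_xy_Xv_mult [simp]: "coeff_xy (Xv * F) a b = coeff_xy F (a - 1) b"
  by (simp add: coeff_xy_def Xv_def fls_X_times_nth)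
lemma coeff_xy_Yv_mult [simp]: "coeff_xy (Yv * F) a b = coeff_xy F a (b - 1)"
  by (simp add: coeff_xy_def Yv_def fls_X_times_nth)
lemma coeff_xy_cst [simp]: "coeff_xy (cst c) a b = (if a = 0 \<and> b = 0 then c else 0)"
  by (simp add: coeff_xy_def cst_def)
lemma coeff_xy_numeral_mult [simp]: "coeff_xy (numeral n * F) a b = numeral n * coeff_xy F a b"
  using coeff_xy_cst_mult[of "numeral n"] by simp
lemma coeff_xy_one [simp]: "coeff_xy 1 a b = (if a = 0 \<and> b = 0 then 1 else 0)"
  using coeff_xy_cst[of 1] by simp

lemma coeff_xy_Xv [simp]: "coeff_xy Xv a b = (if a = 1 \<and> b = 0 then 1 else 0)"
  using coeff_xy_Xv_mult[of 1 a b] by simp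
lemma coeff_xy_Yv [simp]: "coeff_xy Yv a b = (if a = 0 \<and> b = 1 then 1 else 0)"
  using coeff_xy_Yv_mult[of 1 a b] by simp

lemma Xv_nonzero [simp]: "Xv \<noteq> 0"
  by (simp add: Xv_def)
lemma Yv_nonzero [simp]: "Yv \<noteq> 0"
  by (simp add: Yv_def fls_const_nonzero)

definition euler_x :: "ser \<Rightarrow> ser" where "euler_x F = Xv * Dx F"
definition euler_y :: "ser \<Rightarrow> ser" where "euler_y F = Yv * Dy F"

lemma coeff_xy_euler_x [simp]: "coeff_xy (euler_x F) a b = of_int a * coeff_xy F a b"
  by (simp add: euler_x_def coeff_xy_def Xv_def fls_X_times_nth Dx_nth)
lemma coeff_xy_euler_y [simp]: "coeff_xy (euler_y F) a b = of_int b * coeff_xy F a b"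
  by (simp add: euler_y_def coeff_xy_def Yv_def fls_X_times_nth)

lemma euler_x_mult: "euler_x (F * G) = F * euler_x G + euler_x F * G"
  by (simp add: euler_x_def Dx_def algebra_simps)
lemma euler_y_mult: "euler_y (F * G) = F * euler_y G + euler_y F * G"
  by (simp add: euler_y_def Dy_mult algebra_simps)
lemma euler_x_add [simp]: "euler_x (F + G) = euler_x F + euler_x G"
  by (simp add: euler_x_def Dx_def algebra_simps)
lemma euler_y_add [simp]: "euler_y (F + G) = euler_y F + euler_y G"
  by (simp add: euler_y_def algebra_simps)
lemma euler_x_cst [simp]: "euler_x (cst c) = 0"
  by (simp add: euler_x_def Dx_def cst_def)
lemma euler_y_cst [simp]: "euler_y (cst c) = 0"
  by (simp add: euler_y_def cst_def)

section \<open>Clearing the denominators of the PDE\<close>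

definition Qpoly :: "complex \<Rightarrow> ser" where
  "Qpoly K = 4 * Xv * Yv + cst K * (Yv - Xv)^2"

definition Wpoly :: "complex \<Rightarrow> ser" where
  "Wpoly K = 4 * Xv * Yv * Qpoly K"

text \<open>\<open>Wpoly K \<cdot> D\<close> for \<open>K = \<kappa>\<^sup>2\<close>, written with the Euler operators \<open>x \<partial>\<^sub>x\<close> and \<open>y \<partial>\<^sub>y\<close>.\<close>
definition Dnum :: "complex \<Rightarrow> complex \<Rightarrow> ser \<Rightarrow> ser" where
  "Dnum K P F =
     cst (2*K) * (Xv * (Yv * (Yv * (Yv * (euler_x F + euler_y F)))))
   + cst (8 - 4*K) * (Xv * (Xv * (Yv * (Yv * (euler_x F + euler_y F)))))
   + cst (2*K) * (Xv * (Xv * (Xv * (Yv * (euler_x F + euler_y F)))))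
   + cst (\<i>*P*K) * (Yv * (Yv * (cst 3 * euler_x F - euler_y F)))
   + cst (\<i>*P*(8 - 4*K)) * (Xv * (Yv * (euler_x F - euler_y F)))
   + cst (\<i>*P*K) * (Xv * (Xv * (euler_x F - cst 3 * euler_y F)))"

lemma coeff_xy_Dnum: "coeff_xy (Dnum K P F) a b =
     2*K * of_int (a - 1 + (b - 3)) * coeff_xy F (a - 1) (b - 3)
   + (8 - 4*K) * of_int (a - 2 + (b - 2)) * coeff_xy F (a - 2) (b - 2)
   + 2*K * of_int (a - 3 + (b - 1)) * coeff_xy F (a - 3) (b - 1)
   + \<i>*P*K * of_int (3*a - (b - 2)) * coeff_xy F a (b - 2)
   + \<i>*P*(8 - 4*K) * of_int ((a - 1) - (b - 1)) * coeff_xy F (a - 1) (b - 1)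
   + \<i>*P*K * of_int ((a - 2) - 3*b) * coeff_xy F (a - 2) b"
  by (simp add: Dnum_def) (simp add: algebra_simps)

lemma coeff_xy_Qpoly: "coeff_xy (Qpoly K) a b =
   (if a = 0 \<and> b = 2 then K else if a = 1 \<and> b = 1 then 4 - 2*K
    else if a = 2 \<and> b = 0 then K else 0)"
proof -
  have "Qpoly K = cst K * (Yv * (Yv * 1)) + cst (4 - 2*K) * (Xv * (Yv * 1)) + cst K * (Xv * (Xv * 1))"
    by (simp add: Qpoly_def cst_diff cst_mult algebra_simps power2_eq_square)
  thus ?thesis by auto
qed

lemma coeff_xy_Wpoly: "coeff_xy (Wpoly K) a b =
   (if a = 1 \<and> b = 3 then 4*K else if a = 2 \<and> b = 2 then 16 - 8*K
    else if a = 3 \<and> b = 1 then 4*K else 0)"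
proof -
  have "Wpoly K = 4 * (Xv * (Yv * Qpoly K))"
    by (simp add: Wpoly_def algebra_simps)
  thus ?thesis by (auto simp: coeff_xy_Qpoly)
qed

lemma Qpoly_nonzero: "K \<noteq> 0 \<Longrightarrow> Qpoly K \<noteq> 0"
  using coeff_xy_Qpoly[of K 0 2] by (auto simp: coeff_xy_def)
lemma Wpoly_nonzero: "K \<noteq> 0 \<Longrightarrow> Wpoly K \<noteq> 0"
  using coeff_xy_Wpoly[of K 1 3] by (auto simp: coeff_xy_def)

lemma opD_eq_Dnum:
  assumes "\<kappa> \<noteq> 0"
  shows "opD P \<kappa> F = Dnum (\<kappa>^2) P F / Wpoly (\<kappa>^2)"
proof -
  have Q: "Qpoly (\<kappa>^2) \<noteq> 0" using assms by (simp add: Qpoly_nonzero)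
  have "Qf \<kappa> = Qpoly (\<kappa>^2)" by (simp add: Qf_def Qpoly_def)
  thus ?thesis
    using Q unfolding opD_def Rf_def Dnum_def Wpoly_def euler_x_def euler_y_def
    by (simp add: cst_mult cst_diff field_simps) (simp add: Qpoly_def algebra_simps power2_eq_square)
qed

lemma Dnum_mult: "Dnum K P (F * G) = F * Dnum K P G + Dnum K P F * G"
  by (simp add: Dnum_def euler_x_mult euler_y_mult algebra_simps)
lemma Dnum_add [simp]: "Dnum K P (F + G) = Dnum K P F + Dnum K P G"
  by (simp add: Dnum_def algebra_simps)
lemma Dnum_diff [simp]: "Dnum K P (F - G) = Dnum K P F - Dnum K P G"
  using Dnum_add[of K P "F - G" G] by simp
lemma Dnum_cst [simp]: "Dnum K P (cst c) = 0"
  by (simp add: Dnum_def)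
lemma Dnum_zero [simp]: "Dnum K P 0 = 0"
  using Dnum_cst[of K P 0] by simp

lemma Dnum_divide:
  assumes "G \<noteq> 0"
  shows "Dnum K P (F / G) = (G * Dnum K P F - F * Dnum K P G) / G^2"
proof -
  have "Dnum K P F = (F / G) * Dnum K P G + Dnum K P (F / G) * G"
    using Dnum_mult[of K P "F / G" G] assms by simp
  thus ?thesis using assms by (simp add: field_simps power2_eq_square)
qed

text \<open>The PDE multiplied by \<open>3 W\<^sup>3 A\<^sup>2\<close>, with \<open>p2 = p\<^sup>2\<close>.\<close>
definition Epoly :: "complex \<Rightarrow> complex \<Rightarrow> complex \<Rightarrow> ser \<Rightarrow> ser" where
  "Epoly K P p2 A = 3 * (A * (Wpoly K * Dnum K P (Dnum K P A) - Dnum K P A * Dnum K P (Wpoly K))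
      - Wpoly K * (Dnum K P A)^2) + 16 * cst p2 * (A^3 - 1) * (Wpoly K)^2"

lemma pde_iff_Epoly:
  assumes k: "\<kappa> \<noteq> 0" and A: "A \<noteq> 0"
  shows "pde P p \<kappa> A \<longleftrightarrow> Epoly (\<kappa>^2) P (p^2) A = 0"
proof -
  define K W M where "K = \<kappa>^2" and "W = Wpoly K" and "M = Dnum K P"
  have W: "W \<noteq> 0" using k by (simp add: W_def K_def Wpoly_nonzero)
  have D: "opD P \<kappa> F = M F / W" for F using opD_eq_Dnum[OF k] by (simp add: M_def W_def K_def)
  have DD: "opD P \<kappa> (opD P \<kappa> A) = (W * M (M A) - M A * M W) / W^3"
    using W by (simp add: D M_def Dnum_divide field_simps power2_eq_square power3_eq_cube)
  have WQ: "3 * Xv * Yv * Qf \<kappa> = 3 / 4 * W"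
    by (simp add: W_def Wpoly_def Qf_def Qpoly_def K_def)
  define c where "c = 3 * W^3 * A^2"
  have c: "c \<noteq> 0" using W A by (simp add: c_def)
  have L: "(A * opD P \<kappa> (opD P \<kappa> A) - (opD P \<kappa> A)^2) / A^2 * c
       = 3 * (A * (W * M (M A) - M A * M W) - W * (M A)^2)"
    unfolding DD c_def using W A by (simp add: D field_simps power2_eq_square power3_eq_cube)
  have R: "(- cst (4 * p^2) / (3 * Xv * Yv * Qf \<kappa>) * (A - 1 / A^2)) * c
       = - 16 * cst (p^2) * (A^3 - 1) * W^2"
    unfolding c_def WQ using W A by (simp add: cst_mult field_simps power2_eq_square power3_eq_cube)
  have "pde P p \<kappa> A \<longleftrightarrow>
     (A * opD P \<kappa> (opD P \<kappa> A) - (opD P \<kappa> A)^2) / A^2 * c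
       = (- cst (4 * p^2) / (3 * Xv * Yv * Qf \<kappa>) * (A - 1 / A^2)) * c"
    unfolding pde_def using c mult_cancel_right[of _ c] by (metis (no_types, lifting))
  also have "\<dots> \<longleftrightarrow> Epoly K P (p^2) A = 0"
    unfolding L R Epoly_def M_def W_def by (simp add: algebra_simps eq_neg_iff_add_eq_0)
  finally show ?thesis by (simp add: K_def)
qed

section \<open>Orders in x and the linearised equation\<close>

definition xord_ge :: "ser \<Rightarrow> int \<Rightarrow> bool" where
  "xord_ge F n \<longleftrightarrow> (\<forall>a<n. F $$ a = 0)"

lemma xord_geD: "xord_ge F n \<Longrightarrow> a < n \<Longrightarrow> F $$ a = 0"
  by (simp add: xord_ge_def)

lemma xord_ge_mono: "xord_ge F n \<Longrightarrow> m \<le> n \<Longrightarrow> xord_ge F m"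
  by (simp add: xord_ge_def)

lemma xord_ge_mult:
  assumes "xord_ge F n" "xord_ge G m" "t \<le> n + m"
  shows "xord_ge (F * G) t"
  unfolding xord_ge_def
proof (intro allI impI)
  fix a assume "a < t"
  have "(F * G) $$ a = (\<Sum>i=n..a-m. F $$ i * G $$ (a - i))"
    by (rule fls_times_nth_bounds) (use assms in \<open>auto simp: xord_ge_def\<close>)
  also have "\<dots> = 0" using \<open>a < t\<close> assms(3) by simp
  finally show "(F * G) $$ a = 0" .
qed

lemma xord_ge_mult_add: "xord_ge F n \<Longrightarrow> xord_ge G m \<Longrightarrow> xord_ge (F * G) (n + m)"
  by (rule xord_ge_mult) auto

lemma xord_ge_mult_nth:
  assumes "xord_ge F n" "xord_ge G m"
  shows "(F * G) $$ (n + m) = F $$ n * G $$ m"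
proof -
  have "(F * G) $$ (n + m) = (\<Sum>i=n..n+m-m. F $$ i * G $$ (n + m - i))"
    by (rule fls_times_nth_bounds) (use assms in \<open>auto simp: xord_ge_def\<close>)
  thus ?thesis by simp
qed

lemma xord_ge_add: "xord_ge F n \<Longrightarrow> xord_ge G n \<Longrightarrow> xord_ge (F + G) n"
  by (simp add: xord_ge_def)
lemma xord_ge_diff: "xord_ge F n \<Longrightarrow> xord_ge G n \<Longrightarrow> xord_ge (F - G) n"
  by (simp add: xord_ge_def)
lemma xord_ge_cst [simp]: "xord_ge (cst c) 0"
  by (simp add: xord_ge_def cst_def)
lemma xord_ge_one [simp]: "xord_ge 1 0"
  by (simp add: xord_ge_def)
lemma xord_ge_numeral [simp]: "xord_ge (numeral m) 0"
  using xord_ge_cst[of "numeral m"] by simp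
lemma xord_ge_numeral_mult: "xord_ge F n \<Longrightarrow> xord_ge (numeral m * F) n"
  using xord_ge_mult_add[OF xord_ge_numeral] by fastforce
lemma xord_ge_power: "xord_ge F 0 \<Longrightarrow> xord_ge (F ^ j) 0"
  by (induction j) (auto intro: xord_ge_mult)

lemma xord_ge_iff_coeff_xy: "xord_ge F n \<longleftrightarrow> (\<forall>a b. a < n \<longrightarrow> coeff_xy F a b = 0)"
  by (auto simp: xord_ge_def coeff_xy_def fls_eq_iff)

lemma xord_ge_Dnum: "xord_ge F n \<Longrightarrow> xord_ge (Dnum K P F) n"
  unfolding xord_ge_iff_coeff_xy by (simp add: coeff_xy_Dnum)

lemma xord_ge_Wpoly: "xord_ge (Wpoly K) 1"
  unfolding xord_ge_iff_coeff_xy by (simp add: coeff_xy_Wpoly)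

lemma xord_ge_Dnum_Wpoly: "xord_ge (Dnum K P (Wpoly K)) 2"
  unfolding xord_ge_iff_coeff_xy by (auto simp: coeff_xy_Dnum coeff_xy_Wpoly)

text \<open>On \<open>x\<^sup>k h(y)\<close>, the lowest-order part of \<open>Dnum K P\<close> is \<open>\<i> P K x\<^sup>k lead_op k h\<close>.\<close>
definition lead_op :: "int \<Rightarrow> complex fls \<Rightarrow> complex fls" where
  "lead_op k h = fls_X^2 * (of_int (3*k) * h - fls_X * fls_deriv h)"

lemma lead_op_nth: "lead_op k h $$ b = of_int (3*k - (b - 2)) * h $$ (b - 2)"
proof -
  have "lead_op k h $$ b = (of_int (3*k) * h - fls_X * fls_deriv h) $$ (b + - int 2)"
    unfolding lead_op_def fls_X_power_times_conv_shift fls_shift_nth by simp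
  also have "\<dots> = of_int (3*k) * h $$ (b - 2) - of_int (b - 2) * h $$ (b - 2)"
    by (simp only: fls_minus_nth fls_mult_of_int_nth fls_X_times_nth fls_deriv_nth) simp
  finally show ?thesis by (simp add: algebra_simps)
qed

lemma lead_op_const_mult: "lead_op k (fls_const c * h) = fls_const c * lead_op k h"
  by (simp add: lead_op_def algebra_simps)

lemma Dnum_nth_low:
  assumes "xord_ge H k"
  shows "Dnum K P H $$ k = fls_const (\<i>*P*K) * lead_op k (H $$ k)"
proof (rule fls_eqI)
  fix b
  have "Dnum K P H $$ k $$ b = coeff_xy (Dnum K P H) k b" by (simp add: coeff_xy_def)
  also have "\<dots> = \<i>*P*K * of_int (3*k - (b - 2)) * coeff_xy H k (b - 2)"
    using assms unfolding xord_ge_iff_coeff_xy by (simp add: coeff_xy_Dnum)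
  finally show "Dnum K P H $$ k $$ b = (fls_const (\<i>*P*K) * lead_op k (H $$ k)) $$ b"
    by (simp add: lead_op_nth coeff_xy_def)
qed

lemma Dnum_Dnum_nth_low:
  assumes "xord_ge H k"
  shows "Dnum K P (Dnum K P H) $$ k = fls_const ((\<i>*P*K)^2) * lead_op k (lead_op k (H $$ k))"
  using Dnum_nth_low[OF xord_ge_Dnum[OF assms]] Dnum_nth_low[OF assms]
  by (simp add: lead_op_const_mult power2_eq_square)

lemma Wpoly_nth_1: "Wpoly K $$ 1 = fls_const (4*K) * fls_X^3"
  by (rule fls_eqI) (use coeff_xy_Wpoly[of K 1] in \<open>simp add: coeff_xy_def\<close>)

lemma Wpoly_times_nth:
  assumes "xord_ge G k"
  shows "(Wpoly K * G) $$ (k + 1) = fls_const (4*K) * fls_X^3 * G $$ k"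
  using xord_ge_mult_nth[OF xord_ge_Wpoly assms] by (simp add: add.commute Wpoly_nth_1)

definition lin_factor :: "complex \<Rightarrow> complex \<Rightarrow> complex \<Rightarrow> int \<Rightarrow> int \<Rightarrow> complex" where
  "lin_factor K P q k s = 12*q*K*(\<i>*P*K)^2 * of_int ((3*k - s - 2) * (3*k - s))"

definition lin_op :: "complex \<Rightarrow> complex \<Rightarrow> complex \<Rightarrow> int \<Rightarrow> complex fls \<Rightarrow> complex fls" where
  "lin_op K P q k h = fls_const (12*q*K*(\<i>*P*K)^2) * (fls_X^3 * lead_op k (lead_op k h))"

lemma lin_op_nth: "lin_op K P q k h $$ j = lin_factor K P q k (j - 7) * h $$ (j - 7)"
proof -
  have "lin_op K P q k h $$ j = 12*q*K*(\<i>*P*K)^2 * (lead_op k (lead_op k h)) $$ (j + - int 3)"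
    unfolding lin_op_def fls_mult_const_nth fls_X_power_times_conv_shift fls_shift_nth by simp
  also have "\<dots> = 12*q*K*(\<i>*P*K)^2 * (of_int (3*k - (j - 3 - 2)) * (of_int (3*k - (j - 5 - 2)) * h $$ (j - 7)))"
    by (simp add: lead_op_nth algebra_simps)
  finally show ?thesis by (simp add: lin_factor_def algebra_simps)
qed

lemma lin_factor_nonzero:
  assumes "q \<noteq> 0" "K \<noteq> 0" "P \<noteq> 0" "s \<noteq> 3*k" "s \<noteq> 3*k - 2"
  shows "lin_factor K P q k s \<noteq> 0"
proof -
  have "(of_int ((3*k - s - 2) * (3*k - s)) :: complex) \<noteq> 0"
    by (simp only: of_int_eq_0_iff) (use assms in auto)
  thus ?thesis unfolding lin_factor_def using assms by simp
qed

text \<open>Since \<open>A \<equiv> q\<close> modulo \<open>x\<close>, \<open>D A\<close> and \<open>D W\<close> have \<open>x\<close>-order at least 1 and 2, and \<open>W\<close> has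
  \<open>x\<close>-order 1, the only term of \<open>Epoly (A + H) - Epoly A\<close> of \<open>x\<close>-order \<open>k + 1\<close> is \<open>3 q W D\<^sup>2H\<close>.\<close>
lemma Epoly_linearization:
  assumes A0: "xord_ge A 0" and Aq: "xord_ge (A - cst q) 1" and H: "xord_ge H k" and k: "1 \<le> k"
  shows "xord_ge (Epoly K P p2 (A + H) - Epoly K P p2 A) (k + 1)"
    and "(Epoly K P p2 (A + H) - Epoly K P p2 A) $$ (k + 1) = lin_op K P q k (H $$ k)"
proof -
  define W a h aa hh w where "W = Wpoly K" and "a = Dnum K P A" and "h = Dnum K P H"
    and "aa = Dnum K P a" and "hh = Dnum K P h" and "w = Dnum K P W"
  define R where "R = 3*(H*W*aa + (A - cst q)*W*hh + H*W*hh - H*a*w - A*h*w - H*h*w - 2*W*a*h - W*(h*h))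
     + 16*cst p2*(3*A^2*H + 3*A*(H*H) + H*(H*H))*(W*W)"
  have diff: "Epoly K P p2 (A + H) - Epoly K P p2 A = 3*cst q*(W*hh) + R"
    unfolding Epoly_def R_def a_def h_def aa_def hh_def w_def W_def
    by (simp add: algebra_simps power2_eq_square power3_eq_cube)
  have a: "xord_ge a 1"
    using xord_ge_Dnum[OF Aq, of K P] by (simp add: a_def)
  have W: "xord_ge W 1" and w: "xord_ge w 2" and aa: "xord_ge aa 1"
    and h: "xord_ge h k" and hh: "xord_ge hh k"
    using xord_ge_Dnum a H unfolding W_def w_def aa_def h_def hh_def
    by (auto simp: xord_ge_Wpoly xord_ge_Dnum_Wpoly)
  note mult = xord_ge_mult_add
  have "xord_ge (3*A^2*H + 3*A*(H*H) + H*(H*H)) k"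
    using k by (intro xord_ge_add xord_ge_mono[OF mult[OF mult[OF xord_ge_numeral xord_ge_power[OF A0]] H]]
      xord_ge_mono[OF mult[OF mult[OF xord_ge_numeral A0] mult[OF H H]]]
      xord_ge_mono[OF mult[OF H mult[OF H H]]]) auto
  from mult[OF mult[OF mult[OF xord_ge_numeral xord_ge_cst] this] mult[OF W W]]
  have R1: "xord_ge (16*cst p2*(3*A^2*H + 3*A*(H*H) + H*(H*H))*(W*W)) (k + 2)"
    by (rule xord_ge_mono) simp
  have R2: "xord_ge (H*W*aa + (A - cst q)*W*hh + H*W*hh - H*a*w - A*h*w - H*h*w
      - 2*W*a*h - W*(h*h)) (k + 2)"
    using k by (intro xord_ge_add xord_ge_diff xord_ge_mono[OF mult[OF mult[OF H W] aa]]
      xord_ge_mono[OF mult[OF mult[OF Aq W] hh]] xord_ge_mono[OF mult[OF mult[OF H W] hh]]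
      xord_ge_mono[OF mult[OF mult[OF H a] w]] xord_ge_mono[OF mult[OF mult[OF A0 h] w]]
      xord_ge_mono[OF mult[OF mult[OF H h] w]] xord_ge_mono[OF mult[OF W mult[OF h h]]]
      xord_ge_mono[OF mult[OF mult[OF mult[OF xord_ge_numeral W] a] h]]) auto
  have R: "xord_ge R (k + 2)"
    using xord_ge_add[OF xord_ge_numeral_mult[OF R2] R1] unfolding R_def .
  have main: "xord_ge (3*cst q*(W*hh)) (k + 1)"
    using mult[OF mult[OF xord_ge_numeral xord_ge_cst] mult[OF W hh]] by (simp add: add.commute)
  show "xord_ge (Epoly K P p2 (A + H) - Epoly K P p2 A) (k + 1)"
    unfolding diff by (rule xord_ge_add[OF main xord_ge_mono[OF R]]) simp
  have "(3*cst q*(W*hh)) $$ (k + 1) = 3 * (fls_const q * ((W*hh) $$ (k + 1)))"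
    by (simp add: cst_def mult.assoc)
  also have "\<dots> = lin_op K P q k (H $$ k)"
    using Wpoly_times_nth[OF hh] Dnum_Dnum_nth_low[OF H]
    by (simp add: W_def hh_def h_def lin_op_def fls_const_mult_const[symmetric] mult_ac
        del: fls_const_mult_const)
  finally show "(Epoly K P p2 (A + H) - Epoly K P p2 A) $$ (k + 1) = lin_op K P q k (H $$ k)"
    unfolding diff using xord_geD[OF R, of "k + 1"] by simp
qed

section \<open>Monomial support\<close>

definition supp_cone :: "ser \<Rightarrow> int \<Rightarrow> bool" where
  "supp_cone F d \<longleftrightarrow>
     (\<forall>a b. coeff_xy F a b \<noteq> 0 \<longrightarrow> 0 \<le> a \<and> d \<le> a + b \<and> b \<le> 3*a \<and> even (a + b))"

lemma supp_coneD:
  "supp_cone F d \<Longrightarrow> coeff_xy F a b \<noteq> 0 \<Longrightarrow> 0 \<le> a \<and> d \<le> a + b \<and> b \<le> 3*a \<and> even (a + b)"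
  by (simp add: supp_cone_def)

lemma supp_cone_add: "supp_cone F d \<Longrightarrow> supp_cone G d \<Longrightarrow> supp_cone (F + G) d"
  unfolding supp_cone_def by (metis add.right_neutral add_0 coeff_xy_add)
lemma supp_cone_diff: "supp_cone F d \<Longrightarrow> supp_cone G d \<Longrightarrow> supp_cone (F - G) d"
  unfolding supp_cone_def by (metis coeff_xy_diff diff_0 diff_0_right)
lemma supp_cone_cst [simp]: "supp_cone (cst c) 0"
  by (simp add: supp_cone_def)
lemma supp_cone_one [simp]: "supp_cone 1 0"
  by (simp add: supp_cone_def)
lemma supp_cone_numeral [simp]: "supp_cone (numeral n) 0"
  using supp_cone_cst[of "numeral n"] by simp

lemma coeff_xy_mult_nonzeroE:
  assumes "coeff_xy (F * G) a b \<noteq> 0"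
  obtains i j where "coeff_xy F i j \<noteq> 0" "coeff_xy G (a - i) (b - j) \<noteq> 0"
proof -
  from assms have "(F * G) $$ a $$ b \<noteq> 0" by (simp add: coeff_xy_def)
  then obtain i where "(F $$ i * G $$ (a - i)) $$ b \<noteq> 0"
    by (metis (no_types, lifting) fls_times_nth(2) fls_nth_sum sum.neutral)
  then obtain j where "F $$ i $$ j * G $$ (a - i) $$ (b - j) \<noteq> 0"
    by (rule fls_times_nth_nonzeroE)
  thus ?thesis using that by (auto simp: coeff_xy_def)
qed

lemma supp_cone_mult:
  assumes "supp_cone F d1" "supp_cone G d2"
  shows "supp_cone (F * G) (d1 + d2)"
  unfolding supp_cone_def
proof (intro allI impI)
  fix a b assume "coeff_xy (F * G) a b \<noteq> 0"
  then obtain i j where "coeff_xy F i j \<noteq> 0" "coeff_xy G (a - i) (b - j) \<noteq> 0"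
    by (rule coeff_xy_mult_nonzeroE)
  from supp_coneD[OF assms(1) this(1)] supp_coneD[OF assms(2) this(2)]
  show "0 \<le> a \<and> d1 + d2 \<le> a + b \<and> b \<le> 3 * a \<and> even (a + b)"
    by (auto elim!: evenE; presburger)
qed

lemma supp_cone_power: "supp_cone F 0 \<Longrightarrow> supp_cone (F ^ n) 0"
  by (induction n) (auto dest: supp_cone_mult)

lemma supp_cone_Wpoly: "supp_cone (Wpoly K) 4"
  by (auto simp: supp_cone_def coeff_xy_Wpoly)

lemma supp_cone_Dnum:
  assumes "supp_cone F d"
  shows "supp_cone (Dnum K P F) (d + 2)"
  unfolding supp_cone_def
proof (intro allI impI)
  fix a b assume nz: "coeff_xy (Dnum K P F) a b \<noteq> 0"
  note S = supp_coneD[OF assms]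
  show "0 \<le> a \<and> d + 2 \<le> a + b \<and> b \<le> 3 * a \<and> even (a + b)"
  proof (cases "coeff_xy F a (b - 2) \<noteq> 0 \<and> 3*a \<noteq> b - 2")
    case True
    from S[OF conjunct1[OF True]] conjunct2[OF True] show ?thesis by (auto elim!: evenE; presburger)
  next
    case False
    text \<open>The factor \<open>3a - (b - 2)\<close> kills the only term that could leave the cone.\<close>
    hence "of_int (3*a - (b - 2)) * coeff_xy F a (b - 2) = (0 :: complex)"
      by (metis mult_eq_0_iff of_int_0 right_minus_eq)
    with nz have "coeff_xy F (a - 1) (b - 3) \<noteq> 0 \<or> coeff_xy F (a - 2) (b - 2) \<noteq> 0
      \<or> coeff_xy F (a - 3) (b - 1) \<noteq> 0 \<or> coeff_xy F (a - 1) (b - 1) \<noteq> 0 \<or> coeff_xy F (a - 2) b \<noteq> 0"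
      by (auto simp: coeff_xy_Dnum)
    thus ?thesis
    proof (elim disjE)
      assume "coeff_xy F (a - 1) (b - 3) \<noteq> 0"
      from S[OF this] show ?thesis by (auto elim!: evenE; presburger)
    next
      assume "coeff_xy F (a - 2) (b - 2) \<noteq> 0"
      from S[OF this] show ?thesis by (auto elim!: evenE; presburger)
    next
      assume "coeff_xy F (a - 3) (b - 1) \<noteq> 0"
      from S[OF this] show ?thesis by (auto elim!: evenE; presburger)
    next
      assume "coeff_xy F (a - 1) (b - 1) \<noteq> 0"
      from S[OF this] show ?thesis by (auto elim!: evenE; presburger)
    next
      assume "coeff_xy F (a - 2) b \<noteq> 0"
      from S[OF this] show ?thesis by (auto elim!: evenE; presburger)
    qed
  qed
qed

lemma supp_cone_Epoly:
  assumes "supp_cone A 0"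
  shows "supp_cone (Epoly K P p2 A) 8"
proof -
  have W: "supp_cone (Wpoly K) 4" by (rule supp_cone_Wpoly)
  have a: "supp_cone (Dnum K P A) 2" using supp_cone_Dnum[OF assms] by simp
  have aa: "supp_cone (Dnum K P (Dnum K P A)) 4" using supp_cone_Dnum[OF a] by simp
  have w: "supp_cone (Dnum K P (Wpoly K)) 6" using supp_cone_Dnum[OF W] by simp
  have "supp_cone (Wpoly K * Dnum K P (Dnum K P A)) 8" "supp_cone (Dnum K P A * Dnum K P (Wpoly K)) 8"
    using supp_cone_mult[OF W aa] supp_cone_mult[OF a w] by simp_all
  hence "supp_cone (A * (Wpoly K * Dnum K P (Dnum K P A) - Dnum K P A * Dnum K P (Wpoly K))) 8"
    using supp_cone_mult[OF assms supp_cone_diff] by fastforce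
  moreover have "supp_cone (Wpoly K * (Dnum K P A)^2) 8"
    using supp_cone_mult[OF W supp_cone_mult[OF a a]] by (simp add: power2_eq_square)
  moreover have "supp_cone (16 * cst p2 * (A^3 - 1) * (Wpoly K)^2) 8"
    using supp_cone_mult[OF supp_cone_mult[OF supp_cone_mult[OF supp_cone_numeral supp_cone_cst]
        supp_cone_diff[OF supp_cone_power[OF assms] supp_cone_one]] supp_cone_mult[OF W W]]
    by (simp add: power2_eq_square)
  ultimately show ?thesis
    unfolding Epoly_def
    by (intro supp_cone_add supp_cone_diff supp_cone_mult[of 3 0, simplified]) auto
qed

section \<open>The recursive construction\<close>

text \<open>The coefficient of \<open>y\<^sup>s\<close> in \<open>B\<^sub>k\<close> is read off from the coefficient of \<open>x\<^sup>k\<^sup>+\<^sup>1 y\<^sup>s\<^sup>+\<^sup>7\<close> in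
  \<open>Epoly A\<close>, \<open>A\<close> the partial sum of order \<open>k - 1\<close>; at \<open>s = 3k\<close> and \<open>s = 3k - 2\<close>, where
  \<open>lin_factor\<close> vanishes, the free constants are inserted instead.\<close>
definition next_coeff ::
  "complex \<Rightarrow> complex \<Rightarrow> complex \<Rightarrow> complex \<Rightarrow> (nat \<Rightarrow> complex) \<Rightarrow> nat \<Rightarrow> ser \<Rightarrow> int \<Rightarrow> complex" where
  "next_coeff K P p2 q c k A s =
     (if s = 3 * int k then c (2*k) else if s = 3 * int k - 2 then c (2*k - 1)
      else if - int k \<le> s \<and> s \<le> 3 * int k
      then - coeff_xy (Epoly K P p2 A) (int k + 1) (s + 7) / lin_factor K P q (int k) s
      else 0)"

definition next_term ::
  "complex \<Rightarrow> complex \<Rightarrow> complex \<Rightarrow> complex \<Rightarrow> (nat \<Rightarrow> complex) \<Rightarrow> nat \<Rightarrow> ser \<Rightarrow> complex fls" where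
  "next_term K P p2 q c k A = Abs_fls (next_coeff K P p2 q c k A)"

lemma next_coeff_eq_0: "1 \<le> k \<Longrightarrow> b < - int k \<or> 3 * int k < b \<Longrightarrow> next_coeff K P p2 q c k A b = 0"
  by (auto simp: next_coeff_def)

lemma next_term_nth: "next_term K P p2 q c k A $$ s = next_coeff K P p2 q c k A s"
  unfolding next_term_def by (rule nth_Abs_fls_lower_bound[of "- int k - 2"]) (simp add: next_coeff_def)

definition x_monom :: "nat \<Rightarrow> complex fls \<Rightarrow> ser" where
  "x_monom n b = Xv^n * fls_const b"

lemma x_monom_nth: "x_monom n b $$ a = (if a = int n then b else 0)"
  unfolding x_monom_def Xv_def fls_X_power_times_conv_shift fls_shift_nth by simp

lemma coeff_xy_x_monom: "coeff_xy (x_monom n b) a j = (if a = int n then b $$ j else 0)"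
  unfolding coeff_xy_def x_monom_nth by simp

lemma xord_ge_x_monom: "xord_ge (x_monom n b) (int n)"
  by (simp add: xord_ge_def x_monom_nth)

fun partial_sol :: "complex \<Rightarrow> complex \<Rightarrow> complex \<Rightarrow> complex \<Rightarrow> (nat \<Rightarrow> complex) \<Rightarrow> nat \<Rightarrow> ser" where
  "partial_sol K P p2 q c 0 = cst q"
| "partial_sol K P p2 q c (Suc k) = partial_sol K P p2 q c k
     + x_monom (Suc k) (next_term K P p2 q c (Suc k) (partial_sol K P p2 q c k))"

definition sol :: "complex \<Rightarrow> complex \<Rightarrow> complex \<Rightarrow> complex \<Rightarrow> (nat \<Rightarrow> complex) \<Rightarrow> nat \<Rightarrow> complex fls" where
  "sol K P p2 q c k = partial_sol K P p2 q c k $$ int k"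

lemma partial_sol_nth_outside: "a < 0 \<or> int k < a \<Longrightarrow> partial_sol K P p2 q c k $$ a = 0"
  by (induction k) (auto simp: cst_def x_monom_nth)

lemma partial_sol_nth_stable: "j \<le> k \<Longrightarrow> partial_sol K P p2 q c k $$ int j = sol K P p2 q c j"
  unfolding sol_def by (induction k) (auto simp: x_monom_nth le_Suc_eq)

lemma partial_sol_nth:
  "partial_sol K P p2 q c k $$ a = (if 0 \<le> a \<and> a \<le> int k then sol K P p2 q c (nat a) else 0)"
  using partial_sol_nth_stable[of "nat a" k] partial_sol_nth_outside[of a k] by auto

lemma sol_0: "sol K P p2 q c 0 = fls_const q"
  by (simp add: sol_def cst_def)

lemma sol_Suc: "sol K P p2 q c (Suc k) = next_term K P p2 q c (Suc k) (partial_sol K P p2 q c k)"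
  by (simp add: sol_def x_monom_nth partial_sol_nth_outside)

lemma sol_nth:
  "1 \<le> k \<Longrightarrow> sol K P p2 q c k $$ s = next_coeff K P p2 q c k (partial_sol K P p2 q c (k - 1)) s"
  by (cases k) (auto simp: sol_Suc next_term_nth)

lemma sol_normalized:
  assumes "1 \<le> k"
  shows "sol K P p2 q c k $$ (3 * int k) = c (2*k)"
    and "sol K P p2 q c k $$ (3 * int k - 2) = c (2*k - 1)"
  using assms by (simp_all add: sol_nth next_coeff_def)

lemma xord_ge_partial_sol: "xord_ge (partial_sol K P p2 q c k) 0"
  by (simp add: xord_ge_def partial_sol_nth_outside)

lemma xord_ge_partial_sol_minus_q: "xord_ge (partial_sol K P p2 q c k - cst q) 1"
  unfolding xord_ge_def by (auto simp: partial_sol_nth sol_0 cst_def)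

lemma supp_cone_partial_sol: "supp_cone (partial_sol K P p2 q c k) 0"
proof (induction k)
  case (Suc k)
  define A where "A = partial_sol K P p2 q c k"
  have E: "supp_cone (Epoly K P p2 A) 8" using supp_cone_Epoly Suc by (simp add: A_def)
  have "supp_cone (x_monom (Suc k) (next_term K P p2 q c (Suc k) A)) 0"
    unfolding supp_cone_def
  proof (intro allI impI)
    fix a b assume "coeff_xy (x_monom (Suc k) (next_term K P p2 q c (Suc k) A)) a b \<noteq> 0"
    hence a: "a = int (Suc k)" and b: "next_coeff K P p2 q c (Suc k) A b \<noteq> 0"
      by (auto simp: coeff_xy_x_monom next_term_nth split: if_splits)
    show "0 \<le> a \<and> 0 \<le> a + b \<and> b \<le> 3 * a \<and> even (a + b)"
    proof (cases "b = 3 * int (Suc k) \<or> b = 3 * int (Suc k) - 2")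
      case True thus ?thesis using a by (auto; presburger)
    next
      case False
      with b have "- int (Suc k) \<le> b \<and> b \<le> 3 * int (Suc k)"
        and "coeff_xy (Epoly K P p2 A) (int (Suc k) + 1) (b + 7) \<noteq> 0"
        by (auto simp: next_coeff_def split: if_splits)
      from supp_coneD[OF E this(2)] this(1) a show ?thesis by (auto elim!: evenE; presburger)
    qed
  qed
  thus ?case using Suc by (simp add: supp_cone_add A_def)
qed simp

lemma sol_support:
  assumes "sol K P p2 q c k $$ s \<noteq> 0"
  shows "- int k \<le> s \<and> s \<le> 3 * int k \<and> even (int k + s)"
proof -
  have "coeff_xy (partial_sol K P p2 q c k) (int k) s \<noteq> 0"
    using assms by (simp add: coeff_xy_def partial_sol_nth)
  from supp_coneD[OF supp_cone_partial_sol this] show ?thesis by auto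
qed

text \<open>By the support estimate, \<open>Epoly A\<close> has no monomial \<open>x\<^sup>k\<^sup>+\<^sup>1 y\<^sup>s\<^sup>+\<^sup>7\<close> with
  \<open>s \<ge> 3k - 3\<close>: the free constants never meet an obstruction.\<close>
lemma Epoly_plus_lin_op_next_term:
  assumes q: "q \<noteq> 0" and K: "K \<noteq> 0" and P: "P \<noteq> 0" and A: "supp_cone A 0"
  shows "Epoly K P p2 A $$ (int k + 1) + lin_op K P q (int k) (next_term K P p2 q c k A) = 0"
proof (rule fls_eqI)
  fix j :: int
  define s where "s = j - 7"
  have E: "supp_cone (Epoly K P p2 A) 8" by (rule supp_cone_Epoly[OF A])
  have "coeff_xy (Epoly K P p2 A) (int k + 1) j + lin_factor K P q (int k) s * next_coeff K P p2 q c k A s = 0"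
  proof (cases "s = 3 * int k \<or> s = 3 * int k - 2 \<or> \<not> (- int k \<le> s \<and> s \<le> 3 * int k)")
    case True
    have "coeff_xy (Epoly K P p2 A) (int k + 1) j = 0"
    proof (rule ccontr)
      assume "coeff_xy (Epoly K P p2 A) (int k + 1) j \<noteq> 0"
      from supp_coneD[OF E this] True show False by (auto simp: s_def)
    qed
    moreover have "lin_factor K P q (int k) s * next_coeff K P p2 q c k A s = 0"
      using True by (auto simp: lin_factor_def next_coeff_def)
    ultimately show ?thesis by simp
  next
    case False
    hence "lin_factor K P q (int k) s \<noteq> 0" using q K P by (intro lin_factor_nonzero) auto
    thus ?thesis using False by (simp add: next_coeff_def s_def)
  qed
  thus "(Epoly K P p2 A $$ (int k + 1) + lin_op K P q (int k) (next_term K P p2 q c k A)) $$ j = 0 $$ j"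
    by (simp add: lin_op_nth coeff_xy_def s_def next_term_nth)
qed

lemma Epoly_partial_sol_nth:
  assumes q: "q \<noteq> 0" and K: "K \<noteq> 0" and P: "P \<noteq> 0"
  shows "a \<le> int k + 1 \<Longrightarrow> Epoly K P p2 (partial_sol K P p2 q c k) $$ a = 0"
proof (induction k arbitrary: a)
  case 0
  have "xord_ge (16 * cst p2 * (cst q ^ 3 - 1) * (Wpoly K * Wpoly K)) (0 + 0 + (1 + 1))"
    by (intro xord_ge_mult_add xord_ge_numeral_mult xord_ge_diff xord_ge_power xord_ge_Wpoly) simp_all
  thus ?case using 0 by (simp add: Epoly_def xord_ge_def power2_eq_square)
next
  case (Suc k)
  define A H where "A = partial_sol K P p2 q c k"
    and "H = x_monom (Suc k) (next_term K P p2 q c (Suc k) A)"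
  have AH: "partial_sol K P p2 q c (Suc k) = A + H" by (simp add: A_def H_def)
  have lin: "xord_ge (Epoly K P p2 (A + H) - Epoly K P p2 A) (int (Suc k) + 1)"
    "(Epoly K P p2 (A + H) - Epoly K P p2 A) $$ (int (Suc k) + 1) = lin_op K P q (Suc k) (H $$ Suc k)"
    using Epoly_linearization[of A q H "Suc k" K P p2] xord_ge_x_monom[of "Suc k"]
      xord_ge_partial_sol[of K P p2 q c k] xord_ge_partial_sol_minus_q[of K P p2 q c k]
    by (simp_all add: A_def H_def)
  show ?case
  proof (cases "a \<le> int k + 1")
    case True
    thus ?thesis unfolding AH using xord_geD[OF lin(1), of a] Suc.IH[OF True] by (simp add: A_def)
  next
    case False
    hence "a = int (Suc k) + 1" using Suc.prems by simp
    moreover have "Epoly K P p2 A $$ (int (Suc k) + 1)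
        + lin_op K P q (int (Suc k)) (next_term K P p2 q c (Suc k) A) = 0"
      by (rule Epoly_plus_lin_op_next_term[OF q K P]) (simp add: A_def supp_cone_partial_sol)
    ultimately show ?thesis unfolding AH using lin(2) by (simp add: H_def x_monom_nth algebra_simps)
  qed
qed

section \<open>Existence and uniqueness of the formal solution\<close>

lemma series_nth: "series B $$ n = (if n < 0 then 0 else B (nat n))"
  by (simp add: series_def)

lemma pde_series_iff:
  assumes "\<kappa> \<noteq> 0" "B 0 \<noteq> 0"
  shows "pde P p \<kappa> (series B) \<longleftrightarrow> Epoly (\<kappa>^2) P (p^2) (series B) = 0"
proof (rule pde_iff_Epoly[OF assms(1)])
  show "series B \<noteq> 0"
  proof
    assume "series B = 0"
    hence "series B $$ 0 = 0" by simp
    thus False using assms(2) by (simp add: series_nth)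
  qed
qed

lemma rational_y_if_bounded_support:
  assumes "\<And>n. f $$ n \<noteq> 0 \<Longrightarrow> - int N \<le> n \<and> n \<le> int M"
  shows "rational_y f"
proof -
  define a where "a = Poly (map (\<lambda>i. f $$ (int i - int N)) [0..<N + M + 1])"
  have X: "fps_to_fls (fps_of_poly (monom (1::complex) N)) = fls_X ^ N"
    by (rule fls_eqI) (auto simp: coeff_monom)
  have "fps_to_fls (fps_of_poly (monom 1 N)) * f = fps_to_fls (fps_of_poly a)"
  proof (rule fls_eqI)
    fix n :: int
    have "(fps_to_fls (fps_of_poly (monom 1 N)) * f) $$ n = f $$ (n - int N)"
      unfolding X fls_X_power_times_conv_shift fls_shift_nth by simp
    moreover have "f $$ (n - int N) = 0" if "n < 0 \<or> int (N + M) < n"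
      using assms[of "n - int N"] that by force
    moreover have "fps_to_fls (fps_of_poly a) $$ n = f $$ (n - int N)" if "0 \<le> n" "n \<le> int (N + M)"
      using that by (simp add: a_def nth_default_def del: upt_Suc)
    ultimately show "(fps_to_fls (fps_of_poly (monom 1 N)) * f) $$ n = fps_to_fls (fps_of_poly a) $$ n"
      by (cases "n < 0 \<or> int (N + M) < n") (auto simp: a_def nth_default_def)
  qed
  moreover have "monom (1::complex) N \<noteq> 0" by simp
  ultimately show ?thesis unfolding rational_y_def by blast
qed

lemma rational_y_sol: "rational_y (sol K P p2 q c k)"
  by (rule rational_y_if_bounded_support[of _ k "3*k"]) (use sol_support in force)

lemma Epoly_series_sol:
  assumes q: "q \<noteq> 0" and K: "K \<noteq> 0" and P: "P \<noteq> 0"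
  shows "Epoly K P p2 (series (sol K P p2 q c)) = 0"
proof (rule fls_eqI)
  fix a :: int
  define A where "A = partial_sol K P p2 q c (nat a)"
  have "xord_ge (series (sol K P p2 q c) - A) (int (nat a) + 1)"
    by (auto simp: xord_ge_def series_nth partial_sol_nth A_def)
  hence "xord_ge (Epoly K P p2 (A + (series (sol K P p2 q c) - A)) - Epoly K P p2 A) (int (nat a) + 1 + 1)"
    by (intro Epoly_linearization(1)[of A q]) (simp_all add: A_def xord_ge_partial_sol xord_ge_partial_sol_minus_q)
  hence "(Epoly K P p2 (series (sol K P p2 q c)) - Epoly K P p2 A) $$ a = 0"
    by (simp add: xord_ge_def)
  moreover have "Epoly K P p2 A $$ a = 0"
    unfolding A_def by (rule Epoly_partial_sol_nth[OF q K P]) simp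
  ultimately show "Epoly K P p2 (series (sol K P p2 q c)) $$ a = 0 $$ a" by simp
qed

theorem formal_solution_sol:
  assumes "\<kappa> \<noteq> 0" "P \<noteq> 0" "q \<noteq> 0"
  shows "formal_solution P p \<kappa> (sol (\<kappa>^2) P (p^2) q c)"
  using assms Epoly_series_sol[of q "\<kappa>^2" P "p^2" c]
  by (simp add: formal_solution_def rational_y_sol pde_series_iff sol_0 fls_const_nonzero)

lemma lin_op_inj:
  assumes q: "q \<noteq> 0" and K: "K \<noteq> 0" and P: "P \<noteq> 0"
    and L: "lin_op K P q k f = lin_op K P q k g"
    and "f $$ (3 * k) = g $$ (3 * k)" and "f $$ (3 * k - 2) = g $$ (3 * k - 2)"
  shows "f = g"
proof (rule fls_eqI)
  fix s :: int
  show "f $$ s = g $$ s"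
  proof (cases "s = 3 * k \<or> s = 3 * k - 2")
    case False
    hence "lin_factor K P q k s \<noteq> 0" using q K P by (intro lin_factor_nonzero) auto
    moreover have "lin_factor K P q k s * f $$ s = lin_factor K P q k s * g $$ s"
      using arg_cong[OF L, of "\<lambda>h. h $$ (s + 7)"] by (simp add: lin_op_nth)
    ultimately show ?thesis by simp
  qed (use assms in auto)
qed

text \<open>\<open>B\<close> and the partial sum of \<open>sol\<close> up to order \<open>n\<close> both solve the equation at order
  \<open>n + 1\<close> and agree below order \<open>n\<close>; linearising at their common part gives the claim.\<close>
lemma lin_op_eq_sol:
  assumes q: "q \<noteq> 0" and K: "K \<noteq> 0" and P: "P \<noteq> 0" and E: "Epoly K P p2 (series B) = 0"
    and n: "1 \<le> n" and below: "\<And>m. m < n \<Longrightarrow> B m = sol K P p2 q c m"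
  shows "lin_op K P q n (B n) = lin_op K P q n (sol K P p2 q c n)"
proof -
  define T where "T = partial_sol K P p2 q c (n - 1)"
  have T: "xord_ge T 0" "xord_ge (T - cst q) 1" "T $$ int n = 0"
    using n by (simp_all add: T_def xord_ge_partial_sol xord_ge_partial_sol_minus_q partial_sol_nth)
  have "xord_ge (series B - T) n"
    using below by (auto simp: xord_ge_def T_def series_nth partial_sol_nth nat_less_iff)
  from Epoly_linearization(2)[OF T(1,2) this, of K P p2] n T(3)
  have "- Epoly K P p2 T $$ (int n + 1) = lin_op K P q n (B n)"
    using E by (simp add: series_nth)
  moreover have "xord_ge (partial_sol K P p2 q c n - T) n"
    by (auto simp: xord_ge_def T_def partial_sol_nth)
  from Epoly_linearization(2)[OF T(1,2) this, of K P p2] n T(3)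
  have "- Epoly K P p2 T $$ (int n + 1) = lin_op K P q n (sol K P p2 q c n)"
    using Epoly_partial_sol_nth[OF q K P, of "int n + 1" n p2 c] by (simp add: partial_sol_nth)
  ultimately show ?thesis by simp
qed

theorem formal_solution_eq_sol:
  assumes k: "\<kappa> \<noteq> 0" and P: "P \<noteq> 0" and q: "q \<noteq> 0"
    and pde: "pde P p \<kappa> (series B)" and B0: "B 0 = fls_const q"
    and norm: "\<forall>k\<ge>1. B k $$ (3 * int k) = c (2*k) \<and> B k $$ (3 * int k - 2) = c (2*k - 1)"
  shows "B n = sol (\<kappa>^2) P (p^2) q c n"
proof (induction n rule: less_induct)
  case (less n)
  have E: "Epoly (\<kappa>^2) P (p^2) (series B) = 0"
    using pde k q B0 by (simp add: pde_series_iff fls_const_nonzero)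
  show ?case
  proof (cases "n = 0")
    case False
    hence "1 \<le> n" by simp
    have K: "\<kappa>^2 \<noteq> 0" using k by simp
    have "lin_op (\<kappa>^2) P q n (B n) = lin_op (\<kappa>^2) P q n (sol (\<kappa>^2) P (p^2) q c n)"
      by (rule lin_op_eq_sol[OF q K P E \<open>1 \<le> n\<close> less.IH])
    moreover have "B n $$ (3 * int n) = sol (\<kappa>^2) P (p^2) q c n $$ (3 * int n)"
      and "B n $$ (3 * int n - 2) = sol (\<kappa>^2) P (p^2) q c n $$ (3 * int n - 2)"
      using norm \<open>1 \<le> n\<close> by (simp_all add: sol_normalized)
    ultimately show ?thesis by (rule lin_op_inj[OF q K P])
  qed (simp add: B0 sol_0)
qed

section \<open>The leading coefficient and the first correction\<close>

lemma fls_log_deriv_nth_below: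
  fixes f :: "complex fls"
  assumes "f \<noteq> 0" "n < -1"
  shows "(fls_deriv f / f) $$ n = 0"
proof (cases "fls_deriv f = 0")
  case False
  have "fls_subdegree f - 1 \<le> fls_subdegree (fls_deriv f)"
    by (rule fls_subdegree_geI[OF False]) simp
  thus ?thesis using assms(2) by (intro fls_divide_nth_below) simp
qed simp

text \<open>With \<open>u = f'/f\<close> the equation reads \<open>3u + y u' = 0\<close>, forcing \<open>u = c y\<^sup>-\<^sup>3\<close>; but a
  logarithmic derivative has no terms below \<open>y\<^sup>-\<^sup>1\<close>.\<close>
lemma fls_deriv_eq_0_if_ode:
  fixes f :: "complex fls"
  assumes f: "f \<noteq> 0"
    and E: "f * (3 * fls_X^5 * fls_deriv f + fls_X^6 * fls_deriv (fls_deriv f)) = fls_X^6 * (fls_deriv f)^2"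
  shows "fls_deriv f = 0"
proof -
  define u where "u = fls_deriv f / f"
  have d1: "fls_deriv f = u * f" using f by (simp add: u_def)
  hence "fls_deriv (fls_deriv f) = u * (u * f) + fls_deriv u * f" by (simp add: algebra_simps)
  hence "fls_X^5 * f^2 * (3 * u + fls_X * fls_deriv u) = 0"
    using E d1 by (simp add: algebra_simps power2_eq_square numeral_eq_Suc)
  hence U: "3 * u + fls_X * fls_deriv u = 0" using f by simp
  have "u $$ n = 0" for n
  proof (cases "n = -3")
    case False
    have "(3 * u + fls_X * fls_deriv u) $$ n = 0" using U by simp
    hence "of_int (3 + n) * u $$ n = 0" by (simp add: fls_X_times_nth algebra_simps)
    moreover have "(of_int (3 + n) :: complex) \<noteq> 0"
      using False by (simp only: of_int_eq_0_iff)
    ultimately show ?thesis by simp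
  qed (simp add: u_def fls_log_deriv_nth_below f)
  hence "u = 0" by (intro fls_eqI) simp
  thus ?thesis using d1 by simp
qed

lemma Epoly_nth_1:
  assumes A: "xord_ge A 0"
  shows "Epoly K P p2 A $$ 1 = 3 * Wpoly K $$ 1 *
    (A $$ 0 * Dnum K P (Dnum K P A) $$ 0 - Dnum K P A $$ 0 * Dnum K P A $$ 0)"
proof -
  define W a aa w where "W = Wpoly K" and "a = Dnum K P A" and "aa = Dnum K P a"
    and "w = Dnum K P W"
  have W: "xord_ge W 1" and w: "xord_ge w 2" and a: "xord_ge a 0" and aa: "xord_ge aa 0"
    using A by (simp_all add: W_def w_def a_def aa_def xord_ge_Wpoly xord_ge_Dnum_Wpoly xord_ge_Dnum)
  have "Epoly K P p2 A = 3 * (A * (W * aa) - A * (a * w) - W * (a * a))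
      + 16 * cst p2 * (A^3 - 1) * (W * W)"
    by (simp add: Epoly_def W_def a_def aa_def w_def algebra_simps power2_eq_square)
  hence "Epoly K P p2 A $$ 1 = 3 * ((A * (W * aa)) $$ 1 - (A * (a * w)) $$ 1 - (W * (a * a)) $$ 1)
      + (16 * cst p2 * (A^3 - 1) * (W * W)) $$ 1"
    by simp
  moreover have "(A * (W * aa)) $$ (0 + (1 + 0)) = A $$ 0 * (W $$ 1 * aa $$ 0)"
    using xord_ge_mult_nth[OF A xord_ge_mult_add[OF W aa]] xord_ge_mult_nth[OF W aa] by simp
  moreover have "(W * (a * a)) $$ (1 + (0 + 0)) = W $$ 1 * (a $$ 0 * a $$ 0)"
    using xord_ge_mult_nth[OF W xord_ge_mult_add[OF a a]] xord_ge_mult_nth[OF a a] by simp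
  moreover have "(A * (a * w)) $$ 1 = 0"
    using xord_ge_mult_add[OF A xord_ge_mult_add[OF a w]] by (simp add: xord_ge_def)
  moreover have "xord_ge (16 * cst p2 * (A^3 - 1) * (W * W)) (0 + 0 + 0 + (1 + 1))"
    by (intro xord_ge_mult_add xord_ge_diff xord_ge_power A W) simp_all
  ultimately show ?thesis by (simp add: xord_ge_def W_def a_def aa_def) (simp add: algebra_simps)
qed

lemma lead_op_0: "lead_op 0 h = - (fls_X^3 * fls_deriv h)"
  by (simp add: lead_op_def algebra_simps numeral_eq_Suc)

lemma pde_leading_ode:
  assumes k: "\<kappa> \<noteq> 0" and P: "P \<noteq> 0" and pde: "pde P p \<kappa> (series B)" and B0: "B 0 \<noteq> 0"
  shows "B 0 * (3 * fls_X^5 * fls_deriv (B 0) + fls_X^6 * fls_deriv (fls_deriv (B 0)))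
     = fls_X^6 * (fls_deriv (B 0))^2"
proof -
  define K A where "K = \<kappa>^2" and "A = series B"
  have A: "xord_ge A 0" and A0: "A $$ 0 = B 0" by (simp_all add: xord_ge_def A_def series_nth)
  have c: "\<i>*P*K \<noteq> 0" using P k by (simp add: K_def)
  have "Wpoly K $$ 1 \<noteq> 0"
    using k by (simp add: Wpoly_nth_1 K_def fls_const_nonzero)
  moreover have "Epoly K P (p^2) A $$ 1 = 0"
    using pde k B0 by (simp add: pde_series_iff A_def K_def)
  ultimately have "A $$ 0 * Dnum K P (Dnum K P A) $$ 0 = Dnum K P A $$ 0 * Dnum K P A $$ 0"
    using Epoly_nth_1[OF A, of K P "p^2"] by simp
  moreover have "Dnum K P A $$ 0 = fls_const (\<i>*P*K) * lead_op 0 (B 0)"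
    using Dnum_nth_low[OF A] by (simp add: A0)
  moreover have "Dnum K P (Dnum K P A) $$ 0
      = fls_const (\<i>*P*K) * fls_const (\<i>*P*K) * lead_op 0 (lead_op 0 (B 0))"
    using Dnum_Dnum_nth_low[OF A] by (simp add: A0 power2_eq_square)
  ultimately have "fls_const (\<i>*P*K) * fls_const (\<i>*P*K) *
      (B 0 * lead_op 0 (lead_op 0 (B 0)) - lead_op 0 (B 0) * lead_op 0 (B 0)) = 0"
    by (simp add: A0 right_diff_distrib mult_ac del: fls_const_mult_const)
  hence "B 0 * lead_op 0 (lead_op 0 (B 0)) = lead_op 0 (B 0) * lead_op 0 (B 0)"
    using c by (simp add: fls_const_nonzero del: fls_const_mult_const)
  moreover have "fls_deriv (fls_X^3 * h) = fls_X^3 * fls_deriv h + 3 * fls_X^2 * h" for h :: "complex fls"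
    by (simp add: fls_deriv_power algebra_simps)
  ultimately show ?thesis
    unfolding lead_op_0 by (simp add: algebra_simps power2_eq_square numeral_eq_Suc)
qed

theorem formal_solution_leading_const:
  assumes "\<kappa> \<noteq> 0" "P \<noteq> 0" "formal_solution P p \<kappa> B" "B 0 \<noteq> 0"
  shows "\<exists>q. q \<noteq> 0 \<and> B 0 = fls_const q"
proof -
  have "pde P p \<kappa> (series B)" using assms(3) by (simp add: formal_solution_def)
  from pde_leading_ode[OF assms(1,2) this assms(4)]
  have "fls_deriv (B 0) = 0" by (rule fls_deriv_eq_0_if_ode[OF assms(4)])
  hence "B 0 = fls_const (B 0 $$ 0)" by (simp add: fls_deriv_eq_0_iff)
  thus ?thesis using assms(4) by (metis fls_const_0)
qed

lemma sol_1:
  assumes q: "q \<noteq> 0" and K: "K \<noteq> 0" and P: "P \<noteq> 0"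
  shows "sol K P p2 q c 1 = fls_const (c 2) * fls_X ^ 3 + fls_const (c 1) * fls_X
     + fls_const (8 * p2 * (q^3 - 1) / (3 * K * P^2 * q)) * fls_X_inv"
proof (rule fls_eqI)
  fix s :: int
  have "(Wpoly K)^2 $$ 2 = fls_const (16 * K^2) * fls_X ^ 6"
    using xord_ge_mult_nth[OF xord_ge_Wpoly xord_ge_Wpoly, of K K]
    by (simp add: power2_eq_square Wpoly_nth_1 algebra_simps fls_const_mult_const[symmetric]
        power_add[symmetric] del: fls_const_mult_const)
  moreover have "Epoly K P p2 (cst q) = cst (16 * p2 * (q^3 - 1)) * (Wpoly K)^2"
    by (simp add: Epoly_def cst_mult cst_diff cst_power)
  ultimately have "coeff_xy (Epoly K P p2 (cst q)) 2 6 = 256 * p2 * (q^3 - 1) * K^2"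
    by (simp only: coeff_xy_cst_mult) (simp add: coeff_xy_def power2_eq_square)
  hence "sol K P p2 q c 1 $$ (-1) = 8 * p2 * (q^3 - 1) / (3 * K * P^2 * q)"
    using q K P by (simp add: sol_nth next_coeff_def lin_factor_def field_simps power2_eq_square power3_eq_cube)
  moreover have "sol K P p2 q c 1 $$ s = 0" if "s \<notin> {3, 1, -1}"
  proof (rule ccontr)
    assume "sol K P p2 q c 1 $$ s \<noteq> 0"
    from sol_support[OF this] that show False by (auto; presburger)
  qed
  ultimately show "sol K P p2 q c 1 $$ s = (fls_const (c 2) * fls_X ^ 3 + fls_const (c 1) * fls_X
     + fls_const (8 * p2 * (q^3 - 1) / (3 * K * P^2 * q)) * fls_X_inv) $$ s"
    using sol_normalized[of 1 K P p2 q c] by auto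
qed

section \<open>Polynomial dependence on the free constants\<close>

text \<open>A parameter \<open>(K, P, p', q)\<close> stands for \<open>K = \<kappa>\<^sup>2\<close>, \<open>P\<close>, \<open>p'\<close> and \<open>q\<close>, where \<open>p' = p\<close> in
  part (i) and \<open>p' = p\<^sup>2\<close> in part (ii) of the theorem.\<close>
type_synonym param = "complex \<times> complex \<times> complex \<times> complex"

definition param_dom :: "param set" where
  "param_dom = {w. fst w \<noteq> 0 \<and> fst (snd w) \<noteq> 0 \<and> snd (snd (snd w)) \<noteq> 0}"

definition rational_param :: "(param \<Rightarrow> complex) \<Rightarrow> bool" where
  "rational_param r \<longleftrightarrow> (\<exists>N D. \<forall>w\<in>param_dom. eval4 D w \<noteq> 0 \<and> r w = eval4 N w / eval4 D w)"

lemma eval4_add: "eval4 (N1 + N2) w = eval4 N1 w + eval4 N2 w"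
  by (cases w) (simp add: eval4_def)
lemma eval4_mult: "eval4 (N1 * N2) w = eval4 N1 w * eval4 N2 w"
  by (cases w) (simp add: eval4_def)

lemma rational_param_polyI:
  assumes "\<And>w. w \<in> param_dom \<Longrightarrow> r w = eval4 N w"
  shows "rational_param r"
  unfolding rational_param_def
  by (rule exI[of _ N], rule exI[of _ "[:[:[:[:1:]:]:]:]"]) (simp add: assms eval4_def split: prod.split)

lemma rational_param_const [simp]: "rational_param (\<lambda>w. z)"
  by (rule rational_param_polyI[of _ "[:[:[:[:z:]:]:]:]"]) (simp add: eval4_def split: prod.split)
lemma rational_param_fst [simp]: "rational_param (\<lambda>w. fst w)"
  by (rule rational_param_polyI[of _ "[:[:[:[:0, 1:]:]:]:]"]) (simp add: eval4_def split: prod.split)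
lemma rational_param_fst_snd [simp]: "rational_param (\<lambda>w. fst (snd w))"
  by (rule rational_param_polyI[of _ "[:[:[:0, 1:]:]:]"]) (simp add: eval4_def split: prod.split)
lemma rational_param_fst_snd_snd [simp]: "rational_param (\<lambda>w. fst (snd (snd w)))"
  by (rule rational_param_polyI[of _ "[:[:0, 1:]:]"]) (simp add: eval4_def split: prod.split)
lemma rational_param_snd_snd_snd [simp]: "rational_param (\<lambda>w. snd (snd (snd w)))"
  by (rule rational_param_polyI[of _ "[:0, 1:]"]) (simp add: eval4_def split: prod.split)

lemma rational_param_add:
  assumes "rational_param r1" "rational_param r2"
  shows "rational_param (\<lambda>w. r1 w + r2 w)"
proof -
  from assms obtain N1 D1 N2 D2 where
    "\<forall>w\<in>param_dom. eval4 D1 w \<noteq> 0 \<and> r1 w = eval4 N1 w / eval4 D1 w"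
    "\<forall>w\<in>param_dom. eval4 D2 w \<noteq> 0 \<and> r2 w = eval4 N2 w / eval4 D2 w"
    unfolding rational_param_def by blast
  thus ?thesis unfolding rational_param_def
    by - (rule exI[of _ "N1 * D2 + N2 * D1"], rule exI[of _ "D1 * D2"], auto simp: eval4_add eval4_mult field_simps)
qed

lemma rational_param_mult:
  assumes "rational_param r1" "rational_param r2"
  shows "rational_param (\<lambda>w. r1 w * r2 w)"
proof -
  from assms obtain N1 D1 N2 D2 where
    "\<forall>w\<in>param_dom. eval4 D1 w \<noteq> 0 \<and> r1 w = eval4 N1 w / eval4 D1 w"
    "\<forall>w\<in>param_dom. eval4 D2 w \<noteq> 0 \<and> r2 w = eval4 N2 w / eval4 D2 w"
    unfolding rational_param_def by blast
  thus ?thesis unfolding rational_param_def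
    by - (rule exI[of _ "N1 * N2"], rule exI[of _ "D1 * D2"], auto simp: eval4_mult)
qed

lemma rational_param_diff:
  assumes "rational_param r1" "rational_param r2"
  shows "rational_param (\<lambda>w. r1 w - r2 w)"
  using rational_param_add[OF assms(1) rational_param_mult[OF rational_param_const[of "-1"] assms(2)]]
  by simp

lemma rational_param_divide:
  assumes "rational_param r1" "rational_param r2" and nz: "\<And>w. w \<in> param_dom \<Longrightarrow> r2 w \<noteq> 0"
  shows "rational_param (\<lambda>w. r1 w / r2 w)"
proof -
  from assms(1,2) obtain N1 D1 N2 D2 where
    "\<forall>w\<in>param_dom. eval4 D1 w \<noteq> 0 \<and> r1 w = eval4 N1 w / eval4 D1 w"
    "\<forall>w\<in>param_dom. eval4 D2 w \<noteq> 0 \<and> r2 w = eval4 N2 w / eval4 D2 w"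
    unfolding rational_param_def by blast
  with nz show ?thesis unfolding rational_param_def
    by - (rule exI[of _ "N1 * D2"], rule exI[of _ "D1 * N2"], force simp: eval4_mult)
qed

lemma rational_param_sum:
  "finite S \<Longrightarrow> (\<And>i. i \<in> S \<Longrightarrow> rational_param (r i)) \<Longrightarrow> rational_param (\<lambda>w. \<Sum>i\<in>S. r i w)"
  by (induction S rule: finite_induct) (simp_all add: rational_param_add)

definition wexps :: "nat \<Rightarrow> int \<Rightarrow> (nat \<Rightarrow> nat) set" where
  "wexps J m = {n. (\<forall>j. n j \<noteq> 0 \<longrightarrow> 1 \<le> j \<and> j \<le> J) \<and> int (\<Sum>j = 1..J. j * n j) \<le> m}"

definition c_monom :: "(nat \<Rightarrow> complex) \<Rightarrow> (nat \<Rightarrow> nat) \<Rightarrow> nat \<Rightarrow> complex" where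
  "c_monom c n J = (\<Prod>j = 1..J. c j ^ n j)"

lemma expset_eq_wexps: "expset k m = wexps (2 * k - 2) (int m)"
  unfolding wexps_def expset_def of_nat_le_iff ..

lemma wexps_bound:
  assumes "n \<in> wexps J m"
  shows "n j \<le> nat m"
proof (cases "n j = 0")
  case False
  with assms have "1 \<le> j" "j \<le> J" by (auto simp: wexps_def)
  hence "n j \<le> j * n j" "j * n j \<le> (\<Sum>j = 1..J. j * n j)"
    by (simp, intro member_le_sum) auto
  moreover have "int (\<Sum>j = 1..J. j * n j) \<le> m" using assms by (simp add: wexps_def)
  ultimately have "int (n j) \<le> m" by linarith
  thus ?thesis by simp
qed simp

lemma finite_wexps: "finite (wexps J m)"
proof -
  have "wexps J m \<subseteq> {f. \<forall>x. (x \<in> {1..J} \<longrightarrow> f x \<in> {0..nat m}) \<and> (x \<notin> {1..J} \<longrightarrow> f x = 0)}"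
    using wexps_bound by (auto simp: wexps_def)
  thus ?thesis by (rule finite_subset) (rule finite_set_of_finite_funs; simp)
qed

lemma wexps_mono: "m \<le> m' \<Longrightarrow> wexps J m \<subseteq> wexps J m'"
  by (auto simp: wexps_def)

lemma wexps_add: "n1 \<in> wexps J m1 \<Longrightarrow> n2 \<in> wexps J m2 \<Longrightarrow> (\<lambda>j. n1 j + n2 j) \<in> wexps J (m1 + m2)"
  by (auto simp: wexps_def sum.distrib algebra_simps)

lemma wexps_0: "wexps J 0 = {\<lambda>_. 0}"
  using wexps_bound[of _ J 0] by (auto simp: wexps_def)

lemma c_monom_0 [simp]: "c_monom c (\<lambda>_. 0) J = 1"
  by (simp add: c_monom_def)

lemma c_monom_add: "c_monom c (\<lambda>j. n1 j + n2 j) J = c_monom c n1 J * c_monom c n2 J"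
  by (simp add: c_monom_def power_add prod.distrib)

definition weighted_poly :: "nat \<Rightarrow> int \<Rightarrow> (param \<times> (nat \<Rightarrow> complex) \<Rightarrow> complex) set" where
  "weighted_poly J m = {f. \<exists>r. (\<forall>n. rational_param (r n)) \<and>
      (\<forall>w\<in>param_dom. \<forall>c. f (w, c) = (\<Sum>n\<in>wexps J m. r n w * c_monom c n J))}"

lemma weighted_poly_zero [simp]: "(\<lambda>_. 0) \<in> weighted_poly J m"
  unfolding weighted_poly_def by (intro CollectI exI[of _ "\<lambda>n w. 0"]) simp

lemma weighted_poly_add:
  assumes "f \<in> weighted_poly J m" "g \<in> weighted_poly J m"
  shows "(\<lambda>x. f x + g x) \<in> weighted_poly J m"
proof -
  from assms obtain r1 r2 where
    "\<forall>n. rational_param (r1 n)" "\<forall>w\<in>param_dom. \<forall>c. f (w, c) = (\<Sum>n\<in>wexps J m. r1 n w * c_monom c n J)"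
    "\<forall>n. rational_param (r2 n)" "\<forall>w\<in>param_dom. \<forall>c. g (w, c) = (\<Sum>n\<in>wexps J m. r2 n w * c_monom c n J)"
    unfolding weighted_poly_def by blast
  thus ?thesis unfolding weighted_poly_def
    by (intro CollectI exI[of _ "\<lambda>n w. r1 n w + r2 n w"])
       (auto simp: rational_param_add sum.distrib algebra_simps)
qed

lemma weighted_poly_scale:
  assumes "rational_param g" "f \<in> weighted_poly J m"
  shows "(\<lambda>x. g (fst x) * f x) \<in> weighted_poly J m"
proof -
  from assms(2) obtain r where
    "\<forall>n. rational_param (r n)" "\<forall>w\<in>param_dom. \<forall>c. f (w, c) = (\<Sum>n\<in>wexps J m. r n w * c_monom c n J)"
    unfolding weighted_poly_def by blast
  with assms(1) show ?thesis unfolding weighted_poly_def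
    by (intro CollectI exI[of _ "\<lambda>n w. g w * r n w"])
       (auto simp: rational_param_mult sum_distrib_left algebra_simps)
qed

lemma weighted_poly_diff:
  assumes "f \<in> weighted_poly J m" "g \<in> weighted_poly J m"
  shows "(\<lambda>x. f x - g x) \<in> weighted_poly J m"
  using weighted_poly_add[OF assms(1) weighted_poly_scale[OF rational_param_const[of "-1"] assms(2)]]
  by simp

lemma weighted_poly_mono:
  assumes "f \<in> weighted_poly J m" "m \<le> m'"
  shows "f \<in> weighted_poly J m'"
proof -
  from assms(1) obtain r where r:
    "\<forall>n. rational_param (r n)" "\<forall>w\<in>param_dom. \<forall>c. f (w, c) = (\<Sum>n\<in>wexps J m. r n w * c_monom c n J)"
    unfolding weighted_poly_def by blast
  have "(\<Sum>n\<in>wexps J m. r n w * c_monom c n J)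
      = (\<Sum>n\<in>wexps J m'. (if n \<in> wexps J m then r n w else 0) * c_monom c n J)" for w c
    by (rule sum.mono_neutral_cong_left) (auto simp: finite_wexps wexps_mono[OF assms(2)])
  moreover have "rational_param (\<lambda>w. if n \<in> wexps J m then r n w else 0)" for n
    using r by (cases "n \<in> wexps J m") auto
  ultimately show ?thesis using r unfolding weighted_poly_def
    by (intro CollectI exI[of _ "\<lambda>n w. if n \<in> wexps J m then r n w else 0"]) auto
qed

lemma weighted_poly_mult:
  assumes "f \<in> weighted_poly J m1" "g \<in> weighted_poly J m2"
  shows "(\<lambda>x. f x * g x) \<in> weighted_poly J (m1 + m2)"
proof -
  from assms obtain r1 r2 where r1:
    "\<forall>n. rational_param (r1 n)" "\<forall>w\<in>param_dom. \<forall>c. f (w, c) = (\<Sum>n\<in>wexps J m1. r1 n w * c_monom c n J)"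
    and r2:
    "\<forall>n. rational_param (r2 n)" "\<forall>w\<in>param_dom. \<forall>c. g (w, c) = (\<Sum>n\<in>wexps J m2. r2 n w * c_monom c n J)"
    unfolding weighted_poly_def by blast
  define S where "S = wexps J m1 \<times> wexps J m2"
  define fibre where "fibre N = {p \<in> S. (\<lambda>j. fst p j + snd p j) = N}" for N
  define r where "r N w = (\<Sum>p\<in>fibre N. r1 (fst p) w * r2 (snd p) w)" for N w
  have fS: "finite S" by (simp add: S_def finite_wexps)
  have "rational_param (r N)" for N
    unfolding r_def using fS by (intro rational_param_sum rational_param_mult) (simp_all add: fibre_def r1 r2)
  moreover have "f (w, c) * g (w, c) = (\<Sum>N\<in>wexps J (m1 + m2). r N w * c_monom c N J)"
    if w: "w \<in> param_dom" for w c
  proof -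
    define h where "h p = r1 (fst p) w * r2 (snd p) w * c_monom c (\<lambda>j. fst p j + snd p j) J" for p
    have "f (w, c) * g (w, c)
        = (\<Sum>n1\<in>wexps J m1. \<Sum>n2\<in>wexps J m2. r1 n1 w * c_monom c n1 J * (r2 n2 w * c_monom c n2 J))"
      using r1 r2 w by (simp add: sum_product)
    also have "\<dots> = (\<Sum>p\<in>S. h p)"
      by (simp add: S_def h_def sum.cartesian_product c_monom_add algebra_simps split_def)
    also have "\<dots> = (\<Sum>N\<in>wexps J (m1 + m2). \<Sum>p\<in>fibre N. h p)"
      unfolding fibre_def by (rule sum.group[symmetric]) (auto simp: fS finite_wexps S_def wexps_add)
    also have "\<dots> = (\<Sum>N\<in>wexps J (m1 + m2). r N w * c_monom c N J)"
      by (rule sum.cong) (auto simp: r_def h_def fibre_def sum_distrib_right)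
    finally show ?thesis .
  qed
  ultimately show ?thesis unfolding weighted_poly_def by blast
qed

lemma weighted_poly_rational_param:
  assumes "rational_param g"
  shows "(\<lambda>x. g (fst x)) \<in> weighted_poly J 0"
  using assms unfolding weighted_poly_def by (intro CollectI exI[of _ "\<lambda>n. g"]) (simp add: wexps_0)

lemma weighted_poly_var:
  assumes "1 \<le> j" "j \<le> J"
  shows "(\<lambda>x. snd x j) \<in> weighted_poly J (int j)"
proof -
  define d where "d i = (if i = j then 1 else 0 :: nat)" for i
  have "(\<Sum>i = 1..J. i * d i) = j" and cm: "c_monom c d J = c j" for c
    using assms by (simp_all add: d_def c_monom_def if_distrib prod.If_cases sum.If_cases cong: if_cong)
  hence d: "d \<in> wexps J (int j)"
    unfolding wexps_def mem_Collect_eq using assms by (auto simp: d_def)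
  have "(\<Sum>n\<in>wexps J (int j). (if n = d then 1 else 0) * c_monom c n J)
      = (\<Sum>n\<in>wexps J (int j). if n = d then c_monom c n J else 0)" for c
    by (rule sum.cong) auto
  hence "(\<Sum>n\<in>wexps J (int j). (if n = d then 1 else 0) * c_monom c n J) = c j" for c
    using d by (simp add: finite_wexps cm)
  thus ?thesis unfolding weighted_poly_def
    by (intro CollectI exI[of _ "\<lambda>n w. if n = d then 1 else 0"]) auto
qed

lemma weighted_poly_sum:
  "finite S \<Longrightarrow> (\<And>i. i \<in> S \<Longrightarrow> f i \<in> weighted_poly J m) \<Longrightarrow> (\<lambda>x. \<Sum>i\<in>S. f i x) \<in> weighted_poly J m"
  by (induction S rule: finite_induct) (simp_all add: weighted_poly_add)

lemma supp_cone_mono: "supp_cone F d \<Longrightarrow> d' \<le> d \<Longrightarrow> supp_cone F d'"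
  unfolding supp_cone_def by force

lemma coeff_xy_mult_formula:
  assumes F: "supp_cone F d1" and G: "supp_cone G d2"
  shows "coeff_xy (F * G) a b
    = (\<Sum>i=0..a. \<Sum>j=d1 - i..b - (d2 - (a - i)). coeff_xy F i j * coeff_xy G (a - i) (b - j))"
proof -
  have F0: "F $$ i = 0" if "i < 0" for i
    using that supp_coneD[OF F, of i] by (intro fls_eqI) (force simp: coeff_xy_def)
  have G0: "G $$ i = 0" if "i < 0" for i
    using that supp_coneD[OF G, of i] by (intro fls_eqI) (force simp: coeff_xy_def)
  have "(F * G) $$ a = (\<Sum>i=0..a-0. F $$ i * G $$ (a - i))"
    by (rule fls_times_nth_bounds[OF F0 G0])
  hence "coeff_xy (F * G) a b = (\<Sum>i=0..a. (F $$ i * G $$ (a - i)) $$ b)"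
    by (simp add: coeff_xy_def fls_nth_sum)
  also have "\<dots> = (\<Sum>i=0..a. \<Sum>j=d1 - i..b - (d2 - (a - i)). coeff_xy F i j * coeff_xy G (a - i) (b - j))"
  proof (rule sum.cong[OF refl])
    fix i
    have "F $$ i $$ j = 0" if "j < d1 - i" for j
      using that supp_coneD[OF F, of i j] by (force simp: coeff_xy_def)
    moreover have "G $$ (a - i) $$ j = 0" if "j < d2 - (a - i)" for j
      using that supp_coneD[OF G, of "a - i" j] by (force simp: coeff_xy_def)
    ultimately show "(F $$ i * G $$ (a - i)) $$ b
        = (\<Sum>j=d1 - i..b - (d2 - (a - i)). coeff_xy F i j * coeff_xy G (a - i) (b - j))"
      unfolding coeff_xy_def by (rule fls_times_nth_bounds)
  qed
  finally show ?thesis .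
qed

text \<open>For \<open>x\<^sup>k B\<^sub>k\<close>, the weight bound \<open>(a + b) div 2 - d\<close> with \<open>d = 0\<close> is the bound \<open>m\<close>
  on the coefficient of \<open>y\<^sup>2\<^sup>m\<^sup>-\<^sup>k\<close> in the theorem.\<close>
definition graded :: "nat \<Rightarrow> int \<Rightarrow> int \<Rightarrow> (param \<times> (nat \<Rightarrow> complex) \<Rightarrow> ser) \<Rightarrow> bool" where
  "graded J d e F \<longleftrightarrow> (\<forall>x. supp_cone (F x) e) \<and>
     (\<forall>a b. (\<lambda>x. coeff_xy (F x) a b) \<in> weighted_poly J ((a + b) div 2 - d))"

lemma graded_coeff: "graded J d e F \<Longrightarrow> (\<lambda>x. coeff_xy (F x) a b) \<in> weighted_poly J ((a + b) div 2 - d)"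
  by (simp add: graded_def)

lemma graded_supp_cone: "graded J d e F \<Longrightarrow> supp_cone (F x) e"
  unfolding graded_def by blast

lemma graded_mult:
  assumes F: "graded J d1 e1 F" and G: "graded J d2 e2 G"
  shows "graded J (d1 + d2) (e1 + e2) (\<lambda>x. F x * G x)"
proof -
  have "(\<lambda>x. coeff_xy (F x) i j * coeff_xy (G x) (a - i) (b - j)) \<in> weighted_poly J ((a + b) div 2 - (d1 + d2))"
    for a b i j
  proof (rule weighted_poly_mono[OF weighted_poly_mult[OF graded_coeff[OF F] graded_coeff[OF G]]])
    show "(i + j) div 2 - d1 + ((a - i + (b - j)) div 2 - d2) \<le> (a + b) div 2 - (d1 + d2)"
      by presburger
  qed
  moreover have "coeff_xy (F x * G x) a b = (\<Sum>i=0..a. \<Sum>j=e1 - i..b - (e2 - (a - i)).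
      coeff_xy (F x) i j * coeff_xy (G x) (a - i) (b - j))" for x a b
    by (intro coeff_xy_mult_formula graded_supp_cone[OF F] graded_supp_cone[OF G])
  ultimately show ?thesis
    using F G unfolding graded_def by (auto simp: supp_cone_mult intro!: weighted_poly_sum)
qed

lemma graded_add: "graded J d e F \<Longrightarrow> graded J d e G \<Longrightarrow> graded J d e (\<lambda>x. F x + G x)"
  unfolding graded_def by (simp add: weighted_poly_add supp_cone_add)
lemma graded_diff: "graded J d e F \<Longrightarrow> graded J d e G \<Longrightarrow> graded J d e (\<lambda>x. F x - G x)"
  unfolding graded_def by (simp add: weighted_poly_diff supp_cone_diff)
lemma graded_cst:
  assumes "rational_param g"
  shows "graded J 0 0 (\<lambda>x. cst (g (fst x)))"
proof -
  have "(\<lambda>x. coeff_xy (cst (g (fst x))) a b) \<in> weighted_poly J ((a + b) div 2)" for a b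
    using weighted_poly_rational_param[OF assms, of J] by (cases "a = 0 \<and> b = 0") auto
  thus ?thesis by (simp add: graded_def)
qed

lemma graded_numeral_mult: "graded J d e F \<Longrightarrow> graded J d e (\<lambda>x. numeral n * F x)"
  using graded_mult[OF graded_cst[OF rational_param_const[of "numeral n"]]] by simp

abbreviation K_of :: "param \<times> (nat \<Rightarrow> complex) \<Rightarrow> complex" where "K_of x \<equiv> fst (fst x)"
abbreviation P_of :: "param \<times> (nat \<Rightarrow> complex) \<Rightarrow> complex" where "P_of x \<equiv> fst (snd (fst x))"
abbreviation q_of :: "param \<times> (nat \<Rightarrow> complex) \<Rightarrow> complex" where "q_of x \<equiv> snd (snd (snd (fst x)))"

lemma graded_Dnum:
  assumes F: "graded J d e F"
  shows "graded J (d + 1) (e + 2) (\<lambda>x. Dnum (K_of x) (P_of x) (F x))"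
proof -
  have shift: "(\<lambda>x. g (fst x) * coeff_xy (F x) i j) \<in> weighted_poly J ((a + b) div 2 - (d + 1))"
    if "rational_param g" "2 \<le> (a - i) + (b - j)" for g a b i j
  proof (rule weighted_poly_mono[OF weighted_poly_scale[OF that(1) graded_coeff[OF F]]])
    show "(i + j) div 2 - d \<le> (a + b) div 2 - (d + 1)" using that(2) by presburger
  qed
  have "(\<lambda>x. coeff_xy (Dnum (K_of x) (P_of x) (F x)) a b) \<in> weighted_poly J ((a + b) div 2 - (d + 1))"
    for a b
    unfolding coeff_xy_Dnum
    by (intro weighted_poly_add shift rational_param_mult rational_param_diff) simp_all
  with F show ?thesis by (simp add: graded_def supp_cone_Dnum)
qed

lemma graded_Wpoly: "graded J 2 4 (\<lambda>x. Wpoly (K_of x))"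
proof -
  have "(\<lambda>x. coeff_xy (Wpoly (K_of x)) a b) \<in> weighted_poly J ((a + b) div 2 - 2)" for a b
  proof (cases "(a = 1 \<and> b = 3) \<or> (a = 2 \<and> b = 2) \<or> (a = 3 \<and> b = 1)")
    case True
    have "rational_param (\<lambda>w. 4 * fst w)" "rational_param (\<lambda>w. 16 - 8 * fst w)"
      by (intro rational_param_mult rational_param_diff; simp)+
    with True show ?thesis by (auto simp: coeff_xy_Wpoly dest: weighted_poly_rational_param[of _ J])
  qed (auto simp: coeff_xy_Wpoly)
  thus ?thesis by (simp add: graded_def supp_cone_Wpoly)
qed

lemma graded_Epoly:
  assumes pw: "rational_param pw" and A: "graded J 0 0 A"
  shows "graded J 4 8 (\<lambda>x. Epoly (K_of x) (P_of x) (pw (fst x)) (A x))"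
proof -
  define W a aa w where "W x = Wpoly (K_of x)" and "a x = Dnum (K_of x) (P_of x) (A x)"
    and "aa x = Dnum (K_of x) (P_of x) (a x)" and "w x = Dnum (K_of x) (P_of x) (W x)"
    for x :: "param \<times> (nat \<Rightarrow> complex)"
  have W: "graded J 2 4 W" using graded_Wpoly by (simp add: W_def[abs_def])
  have a: "graded J 1 2 a" using graded_Dnum[OF A] by (simp add: a_def[abs_def])
  have aa: "graded J 2 4 aa" using graded_Dnum[OF a] by (simp add: aa_def[abs_def])
  have w: "graded J 3 6 w" using graded_Dnum[OF W] by (simp add: w_def[abs_def])
  have "graded J 4 8 (\<lambda>x. W x * aa x)" "graded J 4 8 (\<lambda>x. a x * w x)"
    "graded J 4 8 (\<lambda>x. W x * (a x * a x))"
    using graded_mult[OF W aa] graded_mult[OF a w] graded_mult[OF W graded_mult[OF a a]] by simp_all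
  hence T1: "graded J 4 8 (\<lambda>x. 3 * (A x * (W x * aa x - a x * w x) - W x * (a x * a x)))"
    using graded_mult[OF A graded_diff] by (intro graded_numeral_mult graded_diff) fastforce+
  have A3: "graded J 0 0 (\<lambda>x. A x * (A x * A x) - 1)"
    using graded_mult[OF A graded_mult[OF A A]] graded_cst[OF rational_param_const[of 1]]
    by (simp add: graded_diff)
  have T2: "graded J 4 8 (\<lambda>x. 16 * (cst (pw (fst x)) * ((A x * (A x * A x) - 1) * (W x * W x))))"
    using graded_mult[OF graded_cst[OF pw] graded_mult[OF A3 graded_mult[OF W W]]]
    by (intro graded_numeral_mult) simp
  have "Epoly K P p2 B = 3 * (B * (Wpoly K * Dnum K P (Dnum K P B) - Dnum K P B * Dnum K P (Wpoly K))
      - Wpoly K * (Dnum K P B * Dnum K P B)) + 16 * (cst p2 * ((B * (B * B) - 1) * (Wpoly K * Wpoly K)))"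
    for K P p2 B
    by (simp add: Epoly_def power2_eq_square power3_eq_cube algebra_simps)
  with graded_add[OF T1 T2] show ?thesis by (simp add: W_def a_def aa_def w_def)
qed

lemma rational_param_lin_factor:
  "rational_param (\<lambda>w. lin_factor (fst w) (fst (snd w)) (snd (snd (snd w))) k s)"
  unfolding lin_factor_def power2_eq_square by (intro rational_param_mult) simp_all

abbreviation partial_sol_of :: "(param \<Rightarrow> complex) \<Rightarrow> nat \<Rightarrow> param \<times> (nat \<Rightarrow> complex) \<Rightarrow> ser" where
  "partial_sol_of pw k x \<equiv> partial_sol (K_of x) (P_of x) (pw (fst x)) (q_of x) (snd x) k"

lemma weighted_poly_next_coeff:
  assumes pw: "rational_param pw" and A: "graded J 0 0 (partial_sol_of pw k)"
    and free: "b = 3 * int (Suc k) \<or> b = 3 * int (Suc k) - 2 \<Longrightarrow> 2 * Suc k \<le> J"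
  shows "(\<lambda>x. next_coeff (K_of x) (P_of x) (pw (fst x)) (q_of x) (snd x) (Suc k) (partial_sol_of pw k x) b)
      \<in> weighted_poly J ((int (Suc k) + b) div 2)"
proof -
  consider "b = 3 * int (Suc k)" | "b = 3 * int (Suc k) - 2"
    | "b \<noteq> 3 * int (Suc k)" "b \<noteq> 3 * int (Suc k) - 2" "- int (Suc k) \<le> b" "b \<le> 3 * int (Suc k)"
    | "\<not> (- int (Suc k) \<le> b \<and> b \<le> 3 * int (Suc k))"
    by linarith
  thus ?thesis
  proof cases
    case 1
    with free have "(\<lambda>x. snd x (2 * Suc k)) \<in> weighted_poly J (int (2 * Suc k))"
      by (intro weighted_poly_var) auto
    with 1 show ?thesis by (simp add: next_coeff_def)
  next
    case 2
    with free have "(\<lambda>x. snd x (2 * Suc k - 1)) \<in> weighted_poly J (int (2 * Suc k - 1))"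
      by (intro weighted_poly_var) auto
    moreover have "int (2 * Suc k - 1) = (int (Suc k) + b) div 2" using 2 by simp
    ultimately show ?thesis using 2 by (simp add: next_coeff_def)
  next
    case 3
    define r where "r (w :: param) = - 1 / lin_factor (fst w) (fst (snd w)) (snd (snd (snd w))) (int (Suc k)) b" for w
    have "rational_param r"
      unfolding r_def using 3
      by (intro rational_param_divide rational_param_lin_factor lin_factor_nonzero) (auto simp: param_dom_def)
    from weighted_poly_scale[OF this graded_coeff[OF graded_Epoly[OF pw A]]]
    have "(\<lambda>x. r (fst x) * coeff_xy (Epoly (K_of x) (P_of x) (pw (fst x)) (partial_sol_of pw k x))
        (int (Suc k) + 1) (b + 7)) \<in> weighted_poly J ((int (Suc k) + 1 + (b + 7)) div 2 - 4)" .
    moreover have "(int (Suc k) + 1 + (b + 7)) div 2 - 4 = (int (Suc k) + b) div 2" by presburger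
    ultimately show ?thesis using 3 by (simp add: next_coeff_def r_def)
  next
    case 4
    hence "next_coeff K P p2 q c (Suc k) B b = 0" for K P p2 q c B
      by (intro next_coeff_eq_0) auto
    thus ?thesis by simp
  qed
qed

lemma graded_partial_sol:
  assumes pw: "rational_param pw"
  shows "2 * k \<le> J \<Longrightarrow> graded J 0 0 (partial_sol_of pw k)"
proof (induction k)
  case 0
  show ?case using graded_cst[OF rational_param_snd_snd_snd] by simp
next
  case (Suc k)
  hence IH: "graded J 0 0 (partial_sol_of pw k)" by simp
  have "(\<lambda>x. coeff_xy (partial_sol_of pw (Suc k) x) a b) \<in> weighted_poly J ((a + b) div 2)" for a b
  proof (cases "a = int (Suc k)")
    case True
    have "(\<lambda>x. next_coeff (K_of x) (P_of x) (pw (fst x)) (q_of x) (snd x) (Suc k) (partial_sol_of pw k x) b)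
        \<in> weighted_poly J ((a + b) div 2)"
      using weighted_poly_next_coeff[OF pw IH, of b] Suc.prems True by simp
    from weighted_poly_add[OF graded_coeff[OF IH, of a b, simplified] this] True
    show ?thesis by (simp add: coeff_xy_x_monom next_term_nth)
  next
    case False
    with graded_coeff[OF IH] show ?thesis by (simp add: coeff_xy_x_monom)
  qed
  thus ?case by (simp add: graded_def supp_cone_partial_sol del: partial_sol.simps)
qed

lemma weighted_poly_sol_nth:
  assumes pw: "rational_param pw" and k: "1 \<le> k" and m: "m \<le> 2 * k - 2"
  shows "(\<lambda>x. sol (K_of x) (P_of x) (pw (fst x)) (q_of x) (snd x) k $$ (int (2 * m) - int k))
    \<in> weighted_poly (2 * k - 2) (int m)"
proof -
  obtain k' where k': "k = Suc k'" using k by (cases k) auto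
  have "graded (2 * k - 2) 0 0 (partial_sol_of pw k')"
    by (rule graded_partial_sol[OF pw]) (simp add: k')
  from weighted_poly_next_coeff[OF pw this, of "int (2 * m) - int k"] m
  have "(\<lambda>x. next_coeff (K_of x) (P_of x) (pw (fst x)) (q_of x) (snd x) k (partial_sol_of pw k' x)
      (int (2 * m) - int k)) \<in> weighted_poly (2 * k - 2) ((int k + (int (2 * m) - int k)) div 2)"
    by (auto simp: k')
  thus ?thesis by (simp add: k' sol_Suc next_term_nth)
qed

lemma weighted_poly_eval4:
  assumes "f \<in> weighted_poly J m"
  shows "\<exists>N D. (\<forall>n. \<forall>w\<in>param_dom. eval4 (D n) w \<noteq> 0) \<and>
    (\<forall>w\<in>param_dom. \<forall>c. f (w, c) = (\<Sum>n\<in>wexps J m. eval4 (N n) w / eval4 (D n) w * c_monom c n J))"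
proof -
  from assms obtain r where r: "\<forall>n. rational_param (r n)"
    "\<forall>w\<in>param_dom. \<forall>c. f (w, c) = (\<Sum>n\<in>wexps J m. r n w * c_monom c n J)"
    unfolding weighted_poly_def by blast
  from r(1) obtain N D where "\<forall>n. \<forall>w\<in>param_dom. eval4 (D n) w \<noteq> 0 \<and> r n w = eval4 (N n) w / eval4 (D n) w"
    unfolding rational_param_def by (simp only: choice_iff) blast
  with r(2) show ?thesis by - (rule exI[of _ N], rule exI[of _ D], auto)
qed

lemma cB_sol:
  assumes "1 \<le> j"
  shows "cB (sol K P p2 q c) j = c j"
proof (cases "even j")
  case True
  with assms sol_normalized(1)[of "j div 2" K P p2 q c] show ?thesis by (auto simp: cB_def)
next
  case False
  hence "2 * ((j + 1) div 2) - 1 = j" by presburger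
  with False sol_normalized(2)[of "(j + 1) div 2" K P p2 q c] show ?thesis by (auto simp: cB_def)
qed

lemma sol_nth_eq_0:
  assumes "\<not> (\<exists>m \<le> 2 * k. s = int (2 * m) - int k)"
  shows "sol K P p2 q c k $$ s = 0"
proof (rule ccontr)
  assume "sol K P p2 q c k $$ s \<noteq> 0"
  from sol_support[OF this] have s: "- int k \<le> s" "s \<le> 3 * int k" "even (int k + s)" by auto
  from s(3) obtain t where "int k + s = 2 * t" by (rule evenE)
  with s(1,2) have "nat t \<le> 2 * k" "s = int (2 * nat t) - int k" by auto
  with assms show False by blast
qed

theorem coeff_form_sol:
  assumes pw: "rational_param pw"
  shows "\<exists>N D. \<forall>w\<in>param_dom. \<forall>c. coeff_form N D w (sol (fst w) (fst (snd w)) (pw w) (snd (snd (snd w))) c)"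
proof -
  have "\<forall>k m. \<exists>N D. 1 \<le> k \<and> m \<le> 2 * k - 2 \<longrightarrow> (\<forall>n. \<forall>w\<in>param_dom. eval4 (D n) w \<noteq> 0) \<and>
    (\<forall>w\<in>param_dom. \<forall>c. sol (fst w) (fst (snd w)) (pw w) (snd (snd (snd w))) c k $$ (int (2 * m) - int k)
        = (\<Sum>n\<in>expset k m. eval4 (N n) w / eval4 (D n) w * c_monom c n (2 * k - 2)))"
    using weighted_poly_eval4[OF weighted_poly_sol_nth[OF pw]] by (simp add: expset_eq_wexps)
  then obtain N D where ND: "\<And>k m. 1 \<le> k \<Longrightarrow> m \<le> 2 * k - 2 \<Longrightarrow> (\<forall>n. \<forall>w\<in>param_dom. eval4 (D k m n) w \<noteq> 0) \<and>
    (\<forall>w\<in>param_dom. \<forall>c. sol (fst w) (fst (snd w)) (pw w) (snd (snd (snd w))) c k $$ (int (2 * m) - int k)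
        = (\<Sum>n\<in>expset k m. eval4 (N k m n) w / eval4 (D k m n) w * c_monom c n (2 * k - 2)))"
    by (simp only: choice_iff) blast
  have "coeff_form N D w (sol (fst w) (fst (snd w)) (pw w) (snd (snd (snd w))) c)"
    if w: "w \<in> param_dom" for w c
    unfolding coeff_form_def
  proof (intro allI impI conjI ballI)
    fix k :: nat and s assume "1 \<le> k" "sol (fst w) (fst (snd w)) (pw w) (snd (snd (snd w))) c k $$ s \<noteq> 0"
    thus "\<exists>m \<le> 2 * k. s = int (2 * m) - int k" using sol_nth_eq_0 by blast
  next
    fix k m :: nat and n assume "1 \<le> k" "m \<le> 2 * k - 2"
    thus "eval4 (D k m n) w \<noteq> 0" using ND w by blast
  next
    fix k m :: nat assume km: "1 \<le> k" "m \<le> 2 * k - 2"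
    have "(\<Prod>j = 1..2 * k - 2. cB (sol (fst w) (fst (snd w)) (pw w) (snd (snd (snd w))) c) j ^ n j)
        = c_monom c n (2 * k - 2)" for n
      unfolding c_monom_def by (rule prod.cong) (simp_all add: cB_sol)
    with ND[OF km] w show "sol (fst w) (fst (snd w)) (pw w) (snd (snd (snd w))) c k $$ (int (2 * m) - int k)
        = (\<Sum>n\<in>expset k m. eval4 (N k m n) w / eval4 (D k m n) w *
            (\<Prod>j = 1..2 * k - 2. cB (sol (fst w) (fst (snd w)) (pw w) (snd (snd (snd w))) c) j ^ n j))"
      by simp
  qed
  thus ?thesis by blast
qed

lemma formal_solution_eq_sol_cB:
  assumes "\<kappa> \<noteq> 0" "P \<noteq> 0" "formal_solution P p \<kappa> B" "B 0 \<noteq> 0"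
  obtains q where "q \<noteq> 0" "B 0 = fls_const q" "B = sol (\<kappa>^2) P (p^2) q (cB B)"
proof -
  obtain q where q: "q \<noteq> 0" "B 0 = fls_const q"
    using formal_solution_leading_const[OF assms] by blast
  have "\<forall>k\<ge>1. B k $$ (3 * int k) = cB B (2*k) \<and> B k $$ (3 * int k - 2) = cB B (2*k - 1)"
  proof (intro allI impI conjI)
    fix k :: nat assume "1 \<le> k"
    moreover from this have "odd (2 * k - 1)" "(2 * k - 1 + 1) div 2 = k" by presburger+
    ultimately show "B k $$ (3 * int k) = cB B (2*k)" "B k $$ (3 * int k - 2) = cB B (2*k - 1)"
      by (simp_all add: cB_def)
  qed
  with assms q have "B n = sol (\<kappa>^2) P (p^2) q (cB B) n" for n
    by (intro formal_solution_eq_sol) (auto simp: formal_solution_def)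
  hence "B = sol (\<kappa>^2) P (p^2) q (cB B)" ..
  with q show thesis by (rule that)
qed

theorem formal_solution_shape:
  "\<exists>N D. \<forall>P p \<kappa>. P \<noteq> 0 \<and> p \<noteq> 0 \<and> \<kappa> \<noteq> 0 \<longrightarrow>
    (\<forall>B. formal_solution P p \<kappa> B \<and> B 0 \<noteq> 0 \<longrightarrow>
       (\<exists>q. q \<noteq> 0 \<and> B 0 = fls_const q \<and>
          (\<exists>c1 c2. B 1 = fls_const c2 * fls_X ^ 3 + fls_const c1 * fls_X
              + fls_const (8 * p^2 * (q^3 - 1) / (3 * \<kappa>^2 * P^2 * q)) * fls_X_inv) \<and>
          coeff_form N D (\<kappa>^2, P, p, q) B))"
proof -
  obtain N D where ND: "\<forall>w\<in>param_dom. \<forall>c. coeff_form N D w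
      (sol (fst w) (fst (snd w)) (fst (snd (snd w)) * fst (snd (snd w))) (snd (snd (snd w))) c)"
    using coeff_form_sol[OF rational_param_mult[OF rational_param_fst_snd_snd rational_param_fst_snd_snd]]
    by blast
  show ?thesis
  proof (rule exI[of _ N], rule exI[of _ D], intro allI impI)
    fix P p \<kappa> B
    assume prems: "P \<noteq> 0 \<and> p \<noteq> 0 \<and> \<kappa> \<noteq> 0" "formal_solution P p \<kappa> B \<and> B 0 \<noteq> 0"
    then obtain q where q: "q \<noteq> 0" "B 0 = fls_const q" and B: "B = sol (\<kappa>^2) P (p^2) q (cB B)"
      using formal_solution_eq_sol_cB[of \<kappa> P p B] by blast
    have "coeff_form N D (\<kappa>^2, P, p, q) B"
      using prems q ND[rule_format, of "(\<kappa>^2, P, p, q)" "cB B"] B by (simp add: param_dom_def power2_eq_square)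
    moreover have "B 1 = fls_const (cB B 2) * fls_X ^ 3 + fls_const (cB B 1) * fls_X
        + fls_const (8 * p^2 * (q^3 - 1) / (3 * \<kappa>^2 * P^2 * q)) * fls_X_inv"
      using prems q sol_1[of q "\<kappa>^2" P "p^2" "cB B"] B by simp
    ultimately show "\<exists>q. q \<noteq> 0 \<and> B 0 = fls_const q \<and>
        (\<exists>c1 c2. B 1 = fls_const c2 * fls_X ^ 3 + fls_const c1 * fls_X
            + fls_const (8 * p^2 * (q^3 - 1) / (3 * \<kappa>^2 * P^2 * q)) * fls_X_inv) \<and>
        coeff_form N D (\<kappa>^2, P, p, q) B"
      using q by blast
  qed
qed

theorem formal_solution_existence_uniqueness:
  "\<exists>N D. \<forall>P p \<kappa> q. P \<noteq> 0 \<and> p \<noteq> 0 \<and> \<kappa> \<noteq> 0 \<and> q \<noteq> 0 \<longrightarrow>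
    (\<forall>c :: nat \<Rightarrow> complex.
       (\<exists>B. formal_solution P p \<kappa> B \<and> B 0 = fls_const q \<and>
            (\<forall>k \<ge> 1. fls_nth (B k) (int (3 * k)) = c (2 * k) \<and> fls_nth (B k) (int (3 * k) - 2) = c (2 * k - 1)) \<and>
            coeff_form N D (\<kappa>^2, P, p^2, q) B) \<and>
       (\<forall>B B'. formal_solution P p \<kappa> B \<and> B 0 = fls_const q \<and>
            (\<forall>k \<ge> 1. fls_nth (B k) (int (3 * k)) = c (2 * k) \<and> fls_nth (B k) (int (3 * k) - 2) = c (2 * k - 1)) \<and>
            formal_solution P p \<kappa> B' \<and> B' 0 = fls_const q \<and>
            (\<forall>k \<ge> 1. fls_nth (B' k) (int (3 * k)) = c (2 * k) \<and> fls_nth (B' k) (int (3 * k) - 2) = c (2 * k - 1))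
            \<longrightarrow> B = B'))"
proof -
  obtain N D where ND: "\<forall>w\<in>param_dom. \<forall>c. coeff_form N D w
      (sol (fst w) (fst (snd w)) (fst (snd (snd w))) (snd (snd (snd w))) c)"
    using coeff_form_sol[OF rational_param_fst_snd_snd] by blast
  show ?thesis
  proof (rule exI[of _ N], rule exI[of _ D], intro allI impI conjI)
    fix P p \<kappa> q :: complex and c :: "nat \<Rightarrow> complex"
    assume "P \<noteq> 0 \<and> p \<noteq> 0 \<and> \<kappa> \<noteq> 0 \<and> q \<noteq> 0"
    hence P: "P \<noteq> 0" and k: "\<kappa> \<noteq> 0" and q: "q \<noteq> 0" by auto
    show "\<exists>B. formal_solution P p \<kappa> B \<and> B 0 = fls_const q \<and>
        (\<forall>k \<ge> 1. B k $$ int (3 * k) = c (2 * k) \<and> B k $$ (int (3 * k) - 2) = c (2 * k - 1)) \<and>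
        coeff_form N D (\<kappa>^2, P, p^2, q) B"
      using formal_solution_sol[OF k P q] sol_0 sol_normalized ND[rule_format, of "(\<kappa>^2, P, p^2, q)" c] k P q
      by (intro exI[of _ "sol (\<kappa>^2) P (p^2) q c"]) (auto simp: param_dom_def)
    show "formal_solution P p \<kappa> B \<and> B 0 = fls_const q \<and>
        (\<forall>k \<ge> 1. B k $$ int (3 * k) = c (2 * k) \<and> B k $$ (int (3 * k) - 2) = c (2 * k - 1)) \<and>
        formal_solution P p \<kappa> B' \<and> B' 0 = fls_const q \<and>
        (\<forall>k \<ge> 1. B' k $$ int (3 * k) = c (2 * k) \<and> B' k $$ (int (3 * k) - 2) = c (2 * k - 1))
        \<Longrightarrow> B = B'" for B B'
      using formal_solution_eq_sol[OF k P q, of p B c] formal_solution_eq_sol[OF k P q, of p B' c]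
      by (auto simp: formal_solution_def)
  qed
qed

theorem proposition2:
  shows
  "(\<exists>N D. \<forall>P p \<kappa>. P \<noteq> 0 \<and> p \<noteq> 0 \<and> \<kappa> \<noteq> 0 \<longrightarrow>
      (\<forall>B. formal_solution P p \<kappa> B \<and> B 0 \<noteq> 0 \<longrightarrow>
         (\<exists>q. q \<noteq> 0 \<and> B 0 = fls_const q \<and>
            (\<exists>c1 c2. B 1 = fls_const c2 * fls_X ^ 3 + fls_const c1 * fls_X
                + fls_const (8 * p^2 * (q^3 - 1) / (3 * \<kappa>^2 * P^2 * q)) * fls_X_inv) \<and>
            coeff_form N D (\<kappa>^2, P, p, q) B)))
   \<and>
   (\<exists>N D. \<forall>P p \<kappa> q. P \<noteq> 0 \<and> p \<noteq> 0 \<and> \<kappa> \<noteq> 0 \<and> q \<noteq> 0 \<longrightarrow>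
      (\<forall>c :: nat \<Rightarrow> complex.
         (\<exists>B. formal_solution P p \<kappa> B \<and> B 0 = fls_const q \<and>
              (\<forall>k \<ge> 1. fls_nth (B k) (int (3 * k)) = c (2 * k) \<and> fls_nth (B k) (int (3 * k) - 2) = c (2 * k - 1)) \<and>
              coeff_form N D (\<kappa>^2, P, p^2, q) B) \<and>
         (\<forall>B B'. formal_solution P p \<kappa> B \<and> B 0 = fls_const q \<and>
              (\<forall>k \<ge> 1. fls_nth (B k) (int (3 * k)) = c (2 * k) \<and> fls_nth (B k) (int (3 * k) - 2) = c (2 * k - 1)) \<and>
              formal_solution P p \<kappa> B' \<and> B' 0 = fls_const q \<and>
              (\<forall>k \<ge> 1. fls_nth (B' k) (int (3 * k)) = c (2 * k) \<and> fls_nth (B' k) (int (3 * k) - 2) = c (2 * k - 1))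
              \<longrightarrow> B = B')))"
  by (intro conjI formal_solution_shape formal_solution_existence_uniqueness)

end
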